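(* Let $F$ be a totally real number field, $E$ a totally imaginary quadratic extension of $F$, with $E\subset\mathbb{C}$ and $F=E\cap\mathbb{R}$, let $\mathcal{O}_E$ be the ring of integers of $E$, and let $H$ be a Hermitian $(n+1)\times(n+1)$ matrix with entries in $E$ of signature $(n,1)$ such that the pair $(H,E/F)$ is admissible. Let $\Gamma$ be a subgroup of $\mathrm{SU}(H,\mathcal{O}_E)$ which contains a loxodromic element. Then $\mathbb{Q}(\mathrm{Tr}(g):g\in\Gamma)=E$ or $\mathbb{Q}(\mathrm{Tr}(g):g\in\Gamma)=F$.
   Context: Let $d=[F:\mathbb{Q}]$, and let $\tau_1=\mathrm{Id},\tau_2,\dots,\tau_d$ be embeddings $E\to\mathbb{C}$, one from each pair of complex-conjugate embeddings. For a matrix $X$ over $E$, ${}^{\tau}X$ denotes the matrix obtained by applying $\tau$ to each entry. The pair $(H,E/F)$ is admissible if $\mathrm{SU}({}^{\tau_i}H)$ (determinant one matrices preserving the Hermitian form ${}^{\tau_i}H$) is compact for all $i=2,\dots,d$. $\mathrm{SU}(H,\mathcal{O}_E)$ is the group of determinant-one matrices $g$ with entries in $\mathcal{O}_E$ satisfying $g^*Hg=H$. An element of $\mathrm{SU}(H)$ is loxodromic if it has an eigenvalue of modulus different from $1$. *)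

theory Defs
  imports "HOL-Analysis.Analysis" "HOL-Computational_Algebra.Polynomial"
begin

definition subfield_C :: "complex set \<Rightarrow> bool" where
  "subfield_C K \<longleftrightarrow> 0 \<in> K \<and> 1 \<in> K \<and>
     (\<forall>x\<in>K. \<forall>y\<in>K. x + y \<in> K \<and> x * y \<in> K) \<and>
     (\<forall>x\<in>K. - x \<in> K \<and> inverse x \<in> K)"

definition number_field :: "complex set \<Rightarrow> bool" where
  "number_field K \<longleftrightarrow> subfield_C K \<and>
     (\<exists>B. finite B \<and> B \<subseteq> K \<and>
        (\<forall>x\<in>K. \<exists>c. (\<forall>b\<in>B. c b \<in> \<rat>) \<and> x = (\<Sum>b\<in>B. c b * b)))"

definition field_emb :: "complex set \<Rightarrow> (complex \<Rightarrow> complex) \<Rightarrow> bool" where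
  "field_emb K \<sigma> \<longleftrightarrow> \<sigma> 1 = 1 \<and>
     (\<forall>x\<in>K. \<forall>y\<in>K. \<sigma> (x + y) = \<sigma> x + \<sigma> y \<and> \<sigma> (x * y) = \<sigma> x * \<sigma> y)"

definition totally_real :: "complex set \<Rightarrow> bool" where
  "totally_real K \<longleftrightarrow> (\<forall>\<sigma>. field_emb K \<sigma> \<longrightarrow> \<sigma> ` K \<subseteq> \<real>)"

definition totally_imaginary :: "complex set \<Rightarrow> bool" where
  "totally_imaginary K \<longleftrightarrow> (\<forall>\<sigma>. field_emb K \<sigma> \<longrightarrow> \<not> (\<sigma> ` K \<subseteq> \<real>))"

definition quadratic_ext :: "complex set \<Rightarrow> complex set \<Rightarrow> bool" where
  "quadratic_ext E F \<longleftrightarrow> F \<subseteq> E \<and>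
     (\<exists>\<alpha>\<in>E. \<alpha> \<notin> F \<and> E = {a + b * \<alpha> | a b. a \<in> F \<and> b \<in> F})"

definition ring_of_integers :: "complex set \<Rightarrow> complex set" where
  "ring_of_integers K = {x \<in> K. algebraic_int x}"

definition field_gen :: "complex set \<Rightarrow> complex set" where
  "field_gen S = \<Inter> {K. subfield_C K \<and> S \<subseteq> K}"

definition cadj :: "complex^'n^'n \<Rightarrow> complex^'n^'n" where
  "cadj M = (\<chi> i j. cnj (M $ j $ i))"

definition hermitian :: "complex^'n^'n \<Rightarrow> bool" where
  "hermitian M \<longleftrightarrow> cadj M = M"

definition emb_mat :: "(complex \<Rightarrow> complex) \<Rightarrow> complex^'n^'n \<Rightarrow> complex^'n^'n" where
  "emb_mat \<tau> M = (\<chi> i j. \<tau> (M $ i $ j))"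

definition char_poly_vec :: "complex^'n^'n \<Rightarrow> complex poly" where
  "char_poly_vec M = det (\<chi> i j. (if i = j then [:0, 1:] else 0) - [:M $ i $ j:])"

definition n_pos_eig :: "complex^'n^'n \<Rightarrow> nat" where
  "n_pos_eig M = (\<Sum>r\<in>{r. r \<in> \<real> \<and> Re r > 0 \<and> poly (char_poly_vec M) r = 0}.
                    order r (char_poly_vec M))"

definition n_neg_eig :: "complex^'n^'n \<Rightarrow> nat" where
  "n_neg_eig M = (\<Sum>r\<in>{r. r \<in> \<real> \<and> Re r < 0 \<and> poly (char_poly_vec M) r = 0}.
                    order r (char_poly_vec M))"

definition has_signature :: "complex^'n^'n \<Rightarrow> nat \<Rightarrow> nat \<Rightarrow> bool" where
  "has_signature M p q \<longleftrightarrow> hermitian M \<and> n_pos_eig M = p \<and> n_neg_eig M = q"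

definition SU :: "complex^'n^'n \<Rightarrow> (complex^'n^'n) set" where
  "SU H = {g. det g = 1 \<and> cadj g ** H ** g = H}"

definition SU_int :: "complex^'n^'n \<Rightarrow> complex set \<Rightarrow> (complex^'n^'n) set" where
  "SU_int H E = {g \<in> SU H. \<forall>i j. g $ i $ j \<in> ring_of_integers E}"

(* (H, E/F) admissible: SU(\<tau>H) compact for every embedding \<tau> of E other than
   the identity and complex conjugation (i.e. all non-identity pairs) *)
definition admissible :: "complex^'n^'n \<Rightarrow> complex set \<Rightarrow> bool" where
  "admissible H E \<longleftrightarrow> (\<forall>\<tau>. field_emb E \<tau> \<and> \<not> (\<forall>x\<in>E. \<tau> x = x) \<and> \<not> (\<forall>x\<in>E. \<tau> x = cnj x)
       \<longrightarrow> compact (SU (emb_mat \<tau> H)))"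

definition loxodromic :: "complex^'n^'n \<Rightarrow> bool" where
  "loxodromic g \<longleftrightarrow> (\<exists>(c::complex) v. v \<noteq> 0 \<and> g *v v = c *s v \<and> norm c \<noteq> 1)"

definition is_subgroup :: "(complex^'n^'n) set \<Rightarrow> (complex^'n^'n) set \<Rightarrow> bool" where
  "is_subgroup \<Gamma> G \<longleftrightarrow> \<Gamma> \<subseteq> G \<and> mat 1 \<in> \<Gamma> \<and> (\<forall>g\<in>\<Gamma>. \<forall>h\<in>\<Gamma>. g ** h \<in> \<Gamma>) \<and>
     (\<forall>g\<in>\<Gamma>. \<exists>h\<in>\<Gamma>. g ** h = mat 1)"

end

theory Submission
  imports Defs "Jordan_Normal_Form.Schur_Decomposition"
begin

text \<open>
  Let K be the field generated by the traces of \<Gamma>. Every embedding \<tau> of E fixing K is the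
  identity or complex conjugation. Otherwise admissibility makes SU(\<tau>H) compact; since E is a
  CM field, \<tau> commutes with complex conjugation and so maps \<Gamma> into SU(\<tau>H), and as \<tau> fixes
  the traces, these are bounded on \<Gamma>. But the traces of the powers of a loxodromic element are
  the power sums of its eigenvalues (Schur triangularisation), and bounded power sums force all
  eigenvalues into the closed unit disc (compare the Cesaro means of the power sums of the
  rescaled eigenvalues). Finally, a subfield K of a number field E \<subseteq> \<complex> is moved by some
  embedding of E unless K = E or K = E \<inter> \<real>, by extending embeddings along minimal polynomials.
\<close>

section \<open>Subfields of the complex numbers\<close>

lemma subfield_C_0: "subfield_C K \<Longrightarrow> 0 \<in> K" by (simp add: subfield_C_def)
lemma subfield_C_1: "subfield_C K \<Longrightarrow> 1 \<in> K" by (simp add: subfield_C_def)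
lemma subfield_C_add: "subfield_C K \<Longrightarrow> x \<in> K \<Longrightarrow> y \<in> K \<Longrightarrow> x + y \<in> K" by (simp add: subfield_C_def)
lemma subfield_C_mult: "subfield_C K \<Longrightarrow> x \<in> K \<Longrightarrow> y \<in> K \<Longrightarrow> x * y \<in> K" by (simp add: subfield_C_def)
lemma subfield_C_uminus: "subfield_C K \<Longrightarrow> x \<in> K \<Longrightarrow> - x \<in> K" by (simp add: subfield_C_def)
lemma subfield_C_inverse: "subfield_C K \<Longrightarrow> x \<in> K \<Longrightarrow> inverse x \<in> K" by (simp add: subfield_C_def)
lemma subfield_C_diff: "subfield_C K \<Longrightarrow> x \<in> K \<Longrightarrow> y \<in> K \<Longrightarrow> x - y \<in> K"
  using subfield_C_add[of K x "-y"] subfield_C_uminus[of K y] by simp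
lemma subfield_C_divide: "subfield_C K \<Longrightarrow> x \<in> K \<Longrightarrow> y \<in> K \<Longrightarrow> x / y \<in> K"
  using subfield_C_mult[of K x "inverse y"] subfield_C_inverse[of K y] by (simp add: divide_inverse)

lemma subfield_C_of_nat: "subfield_C K \<Longrightarrow> of_nat n \<in> K"
  by (induction n) (auto simp: subfield_C_0 subfield_C_1 subfield_C_add)
lemma subfield_C_of_int: "subfield_C K \<Longrightarrow> of_int n \<in> K"
  by (cases n rule: int_cases) (auto simp: subfield_C_of_nat subfield_C_uminus simp del: of_nat_Suc)
lemma subfield_C_Rats: "subfield_C K \<Longrightarrow> x \<in> \<rat> \<Longrightarrow> x \<in> K"
  by (erule Rats_cases') (auto intro!: subfield_C_divide subfield_C_of_int)

lemma subfield_C_sum: "subfield_C K \<Longrightarrow> (\<And>a. a \<in> A \<Longrightarrow> f a \<in> K) \<Longrightarrow> sum f A \<in> K"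
  by (induction A rule: infinite_finite_induct) (auto simp: subfield_C_0 subfield_C_add)
lemma subfield_C_prod: "subfield_C K \<Longrightarrow> (\<And>a. a \<in> A \<Longrightarrow> f a \<in> K) \<Longrightarrow> prod f A \<in> K"
  by (induction A rule: infinite_finite_induct) (auto simp: subfield_C_1 subfield_C_mult)
lemma subfield_C_power: "subfield_C K \<Longrightarrow> x \<in> K \<Longrightarrow> x ^ n \<in> K"
  by (induction n) (auto simp: subfield_C_1 subfield_C_mult)

lemma field_gen_subfield: "subfield_C (field_gen S)"
  unfolding field_gen_def subfield_C_def by blast
lemma field_gen_superset: "S \<subseteq> field_gen S"
  unfolding field_gen_def by blast
lemma field_gen_least: "subfield_C K \<Longrightarrow> S \<subseteq> K \<Longrightarrow> field_gen S \<subseteq> K"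
  unfolding field_gen_def by blast
lemma field_gen_subfield_C_eq: "subfield_C K \<Longrightarrow> field_gen K = K"
  by (meson field_gen_least field_gen_superset subset_antisym subset_refl)

definition poly_over :: "complex set \<Rightarrow> complex poly \<Rightarrow> bool" where
  "poly_over M q \<longleftrightarrow> (\<forall>i. coeff q i \<in> M)"

lemma algebraic_iff_poly_over_Rats:
  "algebraic z \<longleftrightarrow> (\<exists>p. p \<noteq> 0 \<and> poly_over \<rat> p \<and> poly p z = 0)"
  by (auto simp: algebraic_altdef poly_over_def)

lemma poly_over_0: "subfield_C M \<Longrightarrow> poly_over M 0" by (simp add: poly_over_def subfield_C_0)
lemma poly_over_const: "subfield_C M \<Longrightarrow> a \<in> M \<Longrightarrow> poly_over M [:a:]"
  by (auto simp: poly_over_def coeff_pCons subfield_C_0 split: nat.split)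
lemma poly_over_pCons: "subfield_C M \<Longrightarrow> a \<in> M \<Longrightarrow> poly_over M p \<Longrightarrow> poly_over M (pCons a p)"
  by (auto simp: poly_over_def coeff_pCons split: nat.split)
lemma poly_over_add: "subfield_C M \<Longrightarrow> poly_over M p \<Longrightarrow> poly_over M q \<Longrightarrow> poly_over M (p + q)"
  by (simp add: poly_over_def subfield_C_add)
lemma poly_over_diff: "subfield_C M \<Longrightarrow> poly_over M p \<Longrightarrow> poly_over M q \<Longrightarrow> poly_over M (p - q)"
  by (simp add: poly_over_def subfield_C_diff)
lemma poly_over_smult: "subfield_C M \<Longrightarrow> a \<in> M \<Longrightarrow> poly_over M q \<Longrightarrow> poly_over M (Polynomial.smult a q)"
  by (simp add: poly_over_def subfield_C_mult)
lemma poly_over_mult: "subfield_C M \<Longrightarrow> poly_over M p \<Longrightarrow> poly_over M q \<Longrightarrow> poly_over M (p * q)"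
  unfolding poly_over_def coeff_mult by (auto intro!: subfield_C_sum subfield_C_mult)
lemma poly_over_monom: "subfield_C M \<Longrightarrow> a \<in> M \<Longrightarrow> poly_over M (monom a n)"
  by (simp add: poly_over_def coeff_monom subfield_C_0)
lemma poly_over_pCons_tail: "poly_over A (pCons a p) \<Longrightarrow> poly_over A p"
  unfolding poly_over_def by (metis coeff_pCons_Suc)

lemma poly_over_monic_div:
  assumes M: "subfield_C M" and p: "poly_over M p" "lead_coeff p = 1"
  shows "poly_over M q \<Longrightarrow> \<exists>s r. poly_over M s \<and> poly_over M r \<and> q = s * p + r \<and> (r = 0 \<or> degree r < degree p)"
proof (induction "degree q" arbitrary: q rule: less_induct)
  case less
  show ?case
  proof (cases "q = 0 \<or> degree q < degree p")
    case True
    then show ?thesis using less.prems poly_over_0[OF M] by (intro exI[of _ 0] exI[of _ q]) auto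
  next
    case False
    show ?thesis
    proof (cases "degree p = 0")
      case True
      then have "p = 1" using p(2) degree_0_id[OF True] by (metis one_pCons)
      then show ?thesis using less.prems poly_over_0[OF M] by (intro exI[of _ q] exI[of _ 0]) auto
    next
      case dp: False
      let ?k = "degree q - degree p"
      let ?t = "monom (lead_coeff q) ?k"
      define q' where "q' = q - ?t * p"
      have q0: "q \<noteq> 0" and dq: "degree p \<le> degree q" using False by auto
      have lt: "lead_coeff q \<in> M" using less.prems by (simp add: poly_over_def)
      have pt: "poly_over M ?t" by (rule poly_over_monom[OF M lt])
      have pq': "poly_over M q'" unfolding q'_def by (intro poly_over_diff poly_over_mult M less.prems pt p)
      have p0: "p \<noteq> 0" using p(2) by auto
      have lq0: "lead_coeff q \<noteq> 0" using q0 by simp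
      have dtp: "degree (?t * p) = degree q"
        using lq0 p0 dq by (subst degree_mult_eq) (auto simp: degree_monom_eq)
      have ctp: "coeff (?t * p) (degree q) = lead_coeff q"
        using dq p(2) by (simp add: coeff_monom_mult)
      have "degree q' \<le> degree q" unfolding q'_def using dtp by (metis degree_diff_le order_refl)
      moreover have "coeff q' (degree q) = 0" unfolding q'_def using ctp by simp
      moreover have "degree q > 0" using dq dp by simp
      ultimately have "degree q' < degree q"
        by (metis leading_coeff_0_iff le_neq_implies_less degree_0)
      from less.hyps[OF this pq'] obtain s r where sr: "poly_over M s" "poly_over M r" "q' = s * p + r"
        "r = 0 \<or> degree r < degree p" by blast
      have "q = (s + ?t) * p + r" using sr(3) unfolding q'_def by (simp add: algebra_simps)
      then show ?thesis using sr poly_over_add[OF M sr(1) pt] by blast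
    qed
  qed
qed

definition is_min_poly_over :: "complex set \<Rightarrow> complex \<Rightarrow> complex poly \<Rightarrow> bool" where
  "is_min_poly_over M x p \<longleftrightarrow> poly_over M p \<and> lead_coeff p = 1 \<and> poly p x = 0 \<and>
     (\<forall>q. poly_over M q \<longrightarrow> poly q x = 0 \<longrightarrow> q = 0 \<or> degree p \<le> degree q)"

lemma min_poly_over_exists:
  assumes M: "subfield_C M" and x: "algebraic x"
  shows "\<exists>p. is_min_poly_over M x p"
proof -
  define P where "P = (\<lambda>d. \<exists>q. poly_over M q \<and> q \<noteq> 0 \<and> poly q x = 0 \<and> degree q = d)"
  from x obtain q0 where q0: "q0 \<noteq> 0" "poly_over \<rat> q0" "poly q0 x = 0" by (auto simp: algebraic_iff_poly_over_Rats)
  have "poly_over M q0" using q0(2) subfield_C_Rats[OF M] by (auto simp: poly_over_def)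
  then have "P (degree q0)" using q0 unfolding P_def by blast
  then have "P (Least P)" by (rule LeastI)
  then obtain q1 where q1: "poly_over M q1" "q1 \<noteq> 0" "poly q1 x = 0" "degree q1 = Least P"
    unfolding P_def by blast
  define p where "p = Polynomial.smult (inverse (lead_coeff q1)) q1"
  have lc: "lead_coeff q1 \<in> M" using q1(1) by (simp add: poly_over_def)
  have "poly_over M p" unfolding p_def by (intro poly_over_smult M subfield_C_inverse lc q1(1))
  moreover have "lead_coeff p = 1"
  proof -
    have lz: "lead_coeff q1 \<noteq> 0" using q1(2) by simp
    then show ?thesis by (simp add: p_def)
  qed
  moreover have "poly p x = 0" using q1(3) by (simp add: p_def)
  moreover have "degree p = Least P"
  proof -
    have lz: "lead_coeff q1 \<noteq> 0" using q1(2) by simp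
    then show ?thesis using q1(4) by (simp add: p_def)
  qed
  moreover have "\<forall>q. poly_over M q \<longrightarrow> poly q x = 0 \<longrightarrow> q = 0 \<or> Least P \<le> degree q"
    using Least_le[of P] unfolding P_def by blast
  ultimately show ?thesis unfolding is_min_poly_over_def by metis
qed

lemma min_poly_over_dvd:
  assumes M: "subfield_C M" and p: "is_min_poly_over M x p" and q: "poly_over M q" "poly q x = 0"
  shows "\<exists>s. poly_over M s \<and> q = s * p"
proof -
  from poly_over_monic_div[OF M _ _ q(1)] p obtain s r where sr: "poly_over M s" "poly_over M r" "q = s * p + r"
    "r = 0 \<or> degree r < degree p" unfolding is_min_poly_over_def by blast
  have "poly r x = 0" using sr(3) q(2) p by (simp add: is_min_poly_over_def)
  then have "r = 0" using p sr(2,4) unfolding is_min_poly_over_def by force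
  then show ?thesis using sr by auto
qed

lemma min_poly_over_degree_pos:
  assumes p: "is_min_poly_over M x p" shows "degree p \<ge> 1"
proof (rule ccontr)
  assume "\<not> ?thesis"
  then have "degree p = 0" by simp
  then have "p = [:1:]" using p degree_0_id[of p] unfolding is_min_poly_over_def by metis
  then show False using p unfolding is_min_poly_over_def by simp
qed

section \<open>Algebraic numbers and adjunction\<close>

interpretation rat_vs: vector_space "\<lambda>(r::rat) (z::complex). of_rat r * z"
  by unfold_locales (auto simp: algebra_simps of_rat_add of_rat_mult)

lemma algebraic_if_power_repeats:
  fixes z :: complex
  assumes "i < j" "z ^ i = z ^ j"
  shows "algebraic z"
proof -
  define q where "q = monom (1::complex) j - monom 1 i"
  have "coeff q j = 1" using assms(1) by (simp add: q_def coeff_monom)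
  then have "q \<noteq> 0" by auto
  moreover have "poly_over \<rat> q" unfolding poly_over_def q_def by (auto simp: coeff_monom)
  moreover have "poly q z = 0" using assms(2) by (simp add: q_def poly_monom)
  ultimately show ?thesis unfolding algebraic_iff_poly_over_Rats by blast
qed

lemma algebraic_if_powers_in_finite_span:
  fixes z :: complex
  assumes B: "finite B" and span: "\<And>i. z ^ i \<in> rat_vs.span B"
  shows "algebraic z"
proof (cases "inj_on (\<lambda>i. z ^ i) {..card B}")
  case False
  then obtain i j where "i \<noteq> j" "z ^ i = z ^ j" unfolding inj_on_def by auto
  then show ?thesis by (metis algebraic_if_power_repeats linorder_neqE_nat)
next
  case True
  define N where "N = card B"
  define S where "S = (\<lambda>i. z ^ i) ` {..N}"
  have cS: "card S = Suc N" unfolding S_def N_def using True by (simp add: card_image)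
  have SL: "S \<subseteq> rat_vs.span B" using span unfolding S_def by blast
  have "\<not> rat_vs.independent S"
  proof
    assume "rat_vs.independent S"
    from rat_vs.independent_span_bound[OF B(1) this SL] cS show False by (simp add: N_def)
  qed
  then have "rat_vs.dependent S" by simp
  then obtain T u where T: "finite T" "T \<subseteq> S" "(\<Sum>v\<in>T. of_rat (u v) * v) = 0"
    "\<exists>v\<in>T. u v \<noteq> 0"
    unfolding rat_vs.dependent_explicit by blast
  define c where "c i = (if z ^ i \<in> T then of_rat (u (z ^ i)) else (0::complex))" for i
  define q where "q = (\<Sum>i\<le>N. monom (c i) i)"
  have cq: "coeff q j = (if j \<le> N then c j else 0)" for j
    unfolding q_def by (simp add: coeff_sum coeff_monom)
  have "poly q z = (\<Sum>i\<le>N. c i * z ^ i)"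
    unfolding q_def by (simp add: poly_sum poly_monom)
  also have "\<dots> = (\<Sum>i\<in>{i\<in>{..N}. z ^ i \<in> T}. of_rat (u (z ^ i)) * z ^ i)"
    unfolding c_def by (rule sum.mono_neutral_cong_right) auto
  also have "\<dots> = (\<Sum>v\<in>T. of_rat (u v) * v)"
  proof (rule sum.reindex_bij_betw)
    show "bij_betw (\<lambda>i. z ^ i) {i \<in> {..N}. z ^ i \<in> T} T"
      unfolding bij_betw_def
    proof
      show "inj_on (\<lambda>i. z ^ i) {i \<in> {..N}. z ^ i \<in> T}"
        using True unfolding N_def by (rule inj_on_subset) auto
      show "(\<lambda>i. z ^ i) ` {i \<in> {..N}. z ^ i \<in> T} = T"
        using T(2) unfolding S_def by auto
    qed
  qed
  also have "\<dots> = 0" by (rule T(3))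
  finally have pz: "poly q z = 0" .
  from T(4) obtain v where v: "v \<in> T" "u v \<noteq> 0" by blast
  then obtain j where j: "j \<le> N" "v = z ^ j" using T(2) unfolding S_def by auto
  have "coeff q j \<noteq> 0" using cq[of j] j v by (simp add: c_def)
  then have "q \<noteq> 0" by auto
  moreover have "poly_over \<rat> q" unfolding poly_over_def cq c_def by auto
  ultimately show ?thesis using pz unfolding algebraic_iff_poly_over_Rats by blast
qed

lemma number_field_algebraic:
  assumes L: "number_field L" and z: "z \<in> L"
  shows "algebraic z"
proof -
  from L obtain B where B: "finite B"
    "\<forall>x\<in>L. \<exists>c. (\<forall>b\<in>B. c b \<in> \<rat>) \<and> x = (\<Sum>b\<in>B. c b * b)"
    and sfL: "subfield_C L" unfolding number_field_def by blast
  have span: "x \<in> rat_vs.span B" if x: "x \<in> L" for x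
  proof -
    obtain c where c: "\<forall>b\<in>B. c b \<in> \<rat>" "x = (\<Sum>b\<in>B. c b * b)" using B(2) x by blast
    define r where "r = (\<lambda>b. SOME r. c b = of_rat r)"
    have cr: "c b = of_rat (r b)" if "b \<in> B" for b
      using c(1) that unfolding r_def by (metis (mono_tags, lifting) Rats_cases someI_ex)
    have "x = (\<Sum>b\<in>B. of_rat (r b) * b)" using c(2) cr by (auto intro!: sum.cong)
    also have "\<dots> \<in> rat_vs.span B"
      by (intro rat_vs.span_sum rat_vs.span_scale rat_vs.span_base) auto
    finally show ?thesis .
  qed
  show ?thesis
    by (rule algebraic_if_powers_in_finite_span[OF B(1) span[OF subfield_C_power[OF sfL z]]])
qed

definition adjoin :: "complex set \<Rightarrow> complex \<Rightarrow> complex set" where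
  "adjoin M x = {poly q x | q. poly_over M q}"

lemma poly_over_eval_closed:
  assumes R: "0 \<in> R" "\<And>a b. a \<in> R \<Longrightarrow> b \<in> R \<Longrightarrow> a + b \<in> R"
      "\<And>a b. a \<in> R \<Longrightarrow> b \<in> R \<Longrightarrow> a * b \<in> R"
    and MR: "M \<subseteq> R" and z: "z \<in> R"
  shows "poly_over M q \<Longrightarrow> poly q z \<in> R"
proof (induction q rule: pCons_induct)
  case 0 then show ?case using R by simp
next
  case (pCons a p)
  have "a \<in> M" using pCons.prems unfolding poly_over_def by (metis coeff_pCons_0)
  moreover have "poly p z \<in> R" using pCons.IH poly_over_pCons_tail[OF pCons.prems] by blast
  ultimately show ?case using R MR z by auto
qed

lemma adjoin_superset: "subfield_C M \<Longrightarrow> M \<subseteq> adjoin M x"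
  unfolding adjoin_def by (auto intro!: exI[of _ "[:_:]"] poly_over_const)
lemma adjoin_generator: "subfield_C M \<Longrightarrow> x \<in> adjoin M x"
  unfolding adjoin_def by (auto intro!: exI[of _ "[:0,1:]"] poly_over_pCons poly_over_const subfield_C_0 subfield_C_1)
lemma adjoinI: "poly_over M q \<Longrightarrow> poly q x \<in> adjoin M x"
  unfolding adjoin_def by blast
lemma adjoinE: "z \<in> adjoin M x \<Longrightarrow> (\<And>q. poly_over M q \<Longrightarrow> z = poly q x \<Longrightarrow> P) \<Longrightarrow> P"
  unfolding adjoin_def by blast
lemma adjoin_add: assumes M: "subfield_C M" and "a \<in> adjoin M x" "b \<in> adjoin M x" shows "a + b \<in> adjoin M x"
proof -
  obtain q1 q2 where "poly_over M q1" "a = poly q1 x" "poly_over M q2" "b = poly q2 x"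
    using assms(2,3) by (metis adjoinE)
  then show ?thesis using adjoinI[OF poly_over_add[OF M], of q1 q2 x] by simp
qed
lemma adjoin_mult: assumes M: "subfield_C M" and "a \<in> adjoin M x" "b \<in> adjoin M x" shows "a * b \<in> adjoin M x"
proof -
  obtain q1 q2 where "poly_over M q1" "a = poly q1 x" "poly_over M q2" "b = poly q2 x"
    using assms(2,3) by (metis adjoinE)
  then show ?thesis using adjoinI[OF poly_over_mult[OF M], of q1 q2 x] by simp
qed
lemma adjoin_uminus: assumes M: "subfield_C M" and "a \<in> adjoin M x" shows "- a \<in> adjoin M x"
proof -
  obtain q1 where "poly_over M q1" "a = poly q1 x"
    using assms(2) by (metis adjoinE)
  then show ?thesis using adjoinI[OF poly_over_diff[OF M poly_over_0[OF M]], of q1 x] by simp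
qed
lemma adjoin_least:
  assumes "subfield_C K" "M \<subseteq> K" "x \<in> K" shows "adjoin M x \<subseteq> K"
proof
  fix z assume "z \<in> adjoin M x"
  then obtain q where q: "poly_over M q" "z = poly q x" unfolding adjoin_def by blast
  show "z \<in> K" unfolding q(2)
    by (rule poly_over_eval_closed[of K M x q]) (use assms q in \<open>auto simp: subfield_C_0 subfield_C_add subfield_C_mult\<close>)
qed

lemma algebraic_inverse_closed:
  fixes z :: complex
  assumes R: "0 \<in> R" "\<And>a b. a \<in> R \<Longrightarrow> b \<in> R \<Longrightarrow> a + b \<in> R"
      "\<And>a b. a \<in> R \<Longrightarrow> b \<in> R \<Longrightarrow> a * b \<in> R"
    and QR: "\<rat> \<subseteq> R" and z: "z \<in> R" "z \<noteq> 0" and a: "algebraic z"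
  shows "\<exists>w\<in>R. z * w = 1"
proof -
  have "\<forall>p. p \<noteq> 0 \<longrightarrow> poly_over \<rat> p \<longrightarrow> poly p z = 0 \<longrightarrow> (\<exists>w\<in>R. z * w = 1)"
  proof (intro allI)
    fix p :: "complex poly"
    show "p \<noteq> 0 \<longrightarrow> poly_over \<rat> p \<longrightarrow> poly p z = 0 \<longrightarrow> (\<exists>w\<in>R. z * w = 1)"
    proof (induction p rule: pCons_induct)
      case 0 then show ?case by simp
    next
      case (pCons a p)
      show ?case
      proof (intro impI)
        assume h: "pCons a p \<noteq> 0" "poly_over \<rat> (pCons a p)" "poly (pCons a p) z = 0"
        have aQ: "a \<in> \<rat>" using h(2) unfolding poly_over_def by (metis coeff_pCons_0)
        have pQ: "poly_over \<rat> p" using poly_over_pCons_tail[OF h(2)] .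
        have pz: "poly p z \<in> R" by (rule poly_over_eval_closed[OF R QR z(1) pQ])
        show "\<exists>w\<in>R. z * w = 1"
        proof (cases "a = 0")
          case False
          have "- inverse a \<in> R" using aQ QR by auto
          then have "- inverse a * poly p z \<in> R" using R(3)[OF _ pz] by blast
          moreover have "z * (- inverse a * poly p z) = 1"
          proof -
            have e: "z * poly p z = - a" using h(3) by (simp add: eq_neg_iff_add_eq_0 add.commute)
            have "z * (- inverse a * poly p z) = - inverse a * (z * poly p z)" by (simp add: algebra_simps)
            also have "\<dots> = 1" using False e by simp
            finally show ?thesis .
          qed
          ultimately show ?thesis by blast
        next
          case True
          then have "p \<noteq> 0" using h(1) by auto
          moreover have "poly p z = 0" using h(3) True z(2) by simp
          ultimately show ?thesis using pCons.IH pQ by blast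
        qed
      qed
    qed
  qed
  then show ?thesis using a unfolding algebraic_iff_poly_over_Rats by blast
qed

lemma subfield_C_adjoin:
  assumes M: "subfield_C M" and alg: "\<forall>z\<in>adjoin M x. algebraic z"
  shows "subfield_C (adjoin M x)"
proof -
  have i0: "0 \<in> adjoin M x" "1 \<in> adjoin M x" using adjoin_superset[OF M] subfield_C_0[OF M] subfield_C_1[OF M] by auto
  have inv: "inverse a \<in> adjoin M x" if a: "a \<in> adjoin M x" for a
  proof (cases "a = 0")
    case True then show ?thesis using i0 by auto
  next
    case False
    have Q: "\<rat> \<subseteq> adjoin M x" using adjoin_superset[OF M] subfield_C_Rats[OF M] by auto
    have aa: "algebraic a" using alg a by blast
    have "\<exists>w\<in>adjoin M x. a * w = 1"
      by (rule algebraic_inverse_closed[OF i0(1) adjoin_add[OF M] adjoin_mult[OF M] Q a False aa])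
    then obtain w where w: "w \<in> adjoin M x" "a * w = 1" by blast
    then have "inverse a = w" by (simp add: inverse_unique)
    then show ?thesis using w by simp
  qed
  show ?thesis unfolding subfield_C_def
    by (intro conjI ballI i0 inv adjoin_add[OF M] adjoin_mult[OF M] adjoin_uminus[OF M])
qed

section \<open>Extending embeddings\<close>

lemma field_emb_0: assumes M: "subfield_C M" and s: "field_emb M \<sigma>" shows "\<sigma> 0 = 0"
proof -
  have "\<sigma> (0 + 0) = \<sigma> 0 + \<sigma> 0" using s subfield_C_0[OF M] unfolding field_emb_def by blast
  then show ?thesis by simp
qed
lemma field_emb_1: "field_emb M \<sigma> \<Longrightarrow> \<sigma> 1 = 1" by (simp add: field_emb_def)
lemma field_emb_add: "field_emb M \<sigma> \<Longrightarrow> a \<in> M \<Longrightarrow> b \<in> M \<Longrightarrow> \<sigma> (a + b) = \<sigma> a + \<sigma> b"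
  by (simp add: field_emb_def)
lemma field_emb_mult: "field_emb M \<sigma> \<Longrightarrow> a \<in> M \<Longrightarrow> b \<in> M \<Longrightarrow> \<sigma> (a * b) = \<sigma> a * \<sigma> b"
  by (simp add: field_emb_def)
lemma field_emb_diff: assumes M: "subfield_C M" and s: "field_emb M \<sigma>" and ab: "a \<in> M" "b \<in> M"
  shows "\<sigma> (a - b) = \<sigma> a - \<sigma> b"
proof -
  have "\<sigma> (a - b + b) = \<sigma> (a - b) + \<sigma> b" using field_emb_add[OF s subfield_C_diff[OF M ab] ab(2)] .
  then show ?thesis by simp
qed
lemma field_emb_sum: assumes M: "subfield_C M" and s: "field_emb M \<sigma>"
  shows "(\<And>a. a \<in> A \<Longrightarrow> f a \<in> M) \<Longrightarrow> \<sigma> (sum f A) = (\<Sum>a\<in>A. \<sigma> (f a))"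
proof (induction A rule: infinite_finite_induct)
  case (infinite A) then show ?case using field_emb_0[OF M s] by simp
next
  case empty then show ?case using field_emb_0[OF M s] by simp
next
  case (insert a A)
  have "sum f A \<in> M" using insert.prems by (intro subfield_C_sum[OF M]) auto
  then show ?case using insert field_emb_add[OF s, of "f a" "sum f A"] by simp
qed
lemma field_emb_prod: assumes M: "subfield_C M" and s: "field_emb M \<sigma>"
  shows "(\<And>a. a \<in> A \<Longrightarrow> f a \<in> M) \<Longrightarrow> \<sigma> (prod f A) = (\<Prod>a\<in>A. \<sigma> (f a))"
proof (induction A rule: infinite_finite_induct)
  case (infinite A) then show ?case using field_emb_1[OF s] by simp
next
  case empty then show ?case using field_emb_1[OF s] by simp
next
  case (insert a A)
  have "prod f A \<in> M" using insert.prems by (intro subfield_C_prod[OF M]) auto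
  then show ?case using insert field_emb_mult[OF s, of "f a" "prod f A"] by simp
qed

lemma field_emb_uminus: assumes M: "subfield_C M" and s: "field_emb M \<sigma>" and a: "a \<in> M"
  shows "\<sigma> (- a) = - \<sigma> a"
  using field_emb_diff[OF M s subfield_C_0[OF M] a] field_emb_0[OF M s] by simp

lemma field_emb_of_nat: assumes M: "subfield_C M" and s: "field_emb M \<sigma>" shows "\<sigma> (of_nat n) = of_nat n"
proof (induction n)
  case 0 then show ?case using field_emb_0[OF M s] by simp
next
  case (Suc n)
  have "\<sigma> (1 + of_nat n) = \<sigma> 1 + \<sigma> (of_nat n)" by (rule field_emb_add[OF s subfield_C_1[OF M] subfield_C_of_nat[OF M]])
  then show ?case using Suc field_emb_1[OF s] by simp
qed

lemma field_emb_of_int: assumes M: "subfield_C M" and s: "field_emb M \<sigma>" shows "\<sigma> (of_int n) = of_int n"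
proof (cases n rule: int_cases)
  case (nonneg m) then show ?thesis using field_emb_of_nat[OF M s] by simp
next
  case (neg m)
  have "\<sigma> (- of_nat (Suc m)) = - \<sigma> (of_nat (Suc m))" by (rule field_emb_uminus[OF M s subfield_C_of_nat[OF M]])
  then show ?thesis using neg field_emb_of_nat[OF M s, of "Suc m"] by (simp del: of_nat_Suc)
qed

lemma map_poly_emb_add: assumes M: "subfield_C M" and s: "field_emb M \<sigma>" and pq: "poly_over M p" "poly_over M q"
  shows "map_poly \<sigma> (p + q) = map_poly \<sigma> p + map_poly \<sigma> q"
  using pq field_emb_0[OF M s] by (intro poly_eqI) (simp add: coeff_map_poly field_emb_add[OF s] poly_over_def)
lemma map_poly_emb_diff: assumes M: "subfield_C M" and s: "field_emb M \<sigma>" and pq: "poly_over M p" "poly_over M q"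
  shows "map_poly \<sigma> (p - q) = map_poly \<sigma> p - map_poly \<sigma> q"
  using pq field_emb_0[OF M s] by (intro poly_eqI) (simp add: coeff_map_poly field_emb_diff[OF M s] poly_over_def)
lemma map_poly_emb_mult: assumes M: "subfield_C M" and s: "field_emb M \<sigma>" and pq: "poly_over M p" "poly_over M q"
  shows "map_poly \<sigma> (p * q) = map_poly \<sigma> p * map_poly \<sigma> q"
proof (rule poly_eqI)
  fix n
  have s0: "\<sigma> 0 = 0" by (rule field_emb_0[OF M s])
  have "coeff (map_poly \<sigma> (p * q)) n = \<sigma> (\<Sum>i\<le>n. coeff p i * coeff q (n - i))"
    by (simp add: coeff_map_poly[of \<sigma>, OF s0] coeff_mult)
  also have "\<dots> = (\<Sum>i\<le>n. \<sigma> (coeff p i * coeff q (n - i)))"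
    using pq by (intro field_emb_sum[OF M s]) (auto simp: poly_over_def intro: subfield_C_mult[OF M])
  also have "\<dots> = (\<Sum>i\<le>n. \<sigma> (coeff p i) * \<sigma> (coeff q (n - i)))"
    using pq by (intro sum.cong refl field_emb_mult[OF s]) (auto simp: poly_over_def)
  also have "\<dots> = coeff (map_poly \<sigma> p * map_poly \<sigma> q) n"
    by (simp add: coeff_mult coeff_map_poly[of \<sigma>, OF s0])
  finally show "coeff (map_poly \<sigma> (p * q)) n = coeff (map_poly \<sigma> p * map_poly \<sigma> q) n" .
qed
lemma map_poly_emb_const: "\<sigma> 0 = 0 \<Longrightarrow> map_poly \<sigma> [:a:] = [:\<sigma> a:]"
  by (intro poly_eqI) (simp add: coeff_map_poly coeff_pCons split: nat.split)
lemma map_poly_emb_X: "\<sigma> 0 = 0 \<Longrightarrow> \<sigma> 1 = 1 \<Longrightarrow> map_poly \<sigma> [:0, 1:] = [:0, 1:]"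
  by (intro poly_eqI) (simp add: coeff_map_poly coeff_pCons split: nat.split)

lemma map_poly_emb_eval_well_defined:
  assumes M: "subfield_C M" and s: "field_emb M \<sigma>" and p: "is_min_poly_over M x p"
    and y: "poly (map_poly \<sigma> p) y = 0"
    and q: "poly_over M q1" "poly_over M q2" "poly q1 x = poly q2 x"
  shows "poly (map_poly \<sigma> q1) y = poly (map_poly \<sigma> q2) y"
proof -
  have pM: "poly_over M p" using p by (simp add: is_min_poly_over_def)
  have "poly_over M (q1 - q2)" using poly_over_diff[OF M q(1,2)] .
  moreover have "poly (q1 - q2) x = 0" using q(3) by simp
  ultimately obtain sp where sp: "poly_over M sp" "q1 - q2 = sp * p" using min_poly_over_dvd[OF M p] by blast
  have "map_poly \<sigma> q1 - map_poly \<sigma> q2 = map_poly \<sigma> (q1 - q2)" using map_poly_emb_diff[OF M s q(1,2)] by simp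
  also have "\<dots> = map_poly \<sigma> sp * map_poly \<sigma> p" using sp map_poly_emb_mult[OF M s sp(1) pM] by simp
  finally have "poly (map_poly \<sigma> q1 - map_poly \<sigma> q2) y = 0" using y by simp
  then show ?thesis by simp
qed

lemma field_emb_extend_adjoin:
  assumes M: "subfield_C M" and s: "field_emb M \<sigma>" and p: "is_min_poly_over M x p"
    and y: "poly (map_poly \<sigma> p) y = 0"
  shows "\<exists>\<tau>. field_emb (adjoin M x) \<tau> \<and> (\<forall>m\<in>M. \<tau> m = \<sigma> m) \<and> \<tau> x = y"
proof -
  have s0: "\<sigma> 0 = 0" by (rule field_emb_0[OF M s])
  define \<tau> where "\<tau> z = poly (map_poly \<sigma> (SOME q. poly_over M q \<and> poly q x = z)) y" for z
  have tq: "\<tau> (poly q x) = poly (map_poly \<sigma> q) y" if q: "poly_over M q" for q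
  proof -
    have ex: "\<exists>q'. poly_over M q' \<and> poly q' x = poly q x" using q by blast
    have "poly_over M (SOME q'. poly_over M q' \<and> poly q' x = poly q x) \<and>
       poly (SOME q'. poly_over M q' \<and> poly q' x = poly q x) x = poly q x"
      by (rule someI_ex[OF ex])
    then show ?thesis unfolding \<tau>_def using map_poly_emb_eval_well_defined[OF M s p y] q by blast
  qed
  have t1: "\<tau> 1 = 1"
    using tq[OF poly_over_const[OF M subfield_C_1[OF M]]] map_poly_emb_const[of \<sigma>, OF s0, of 1] field_emb_1[OF s] by simp
  have tM: "\<tau> m = \<sigma> m" if "m \<in> M" for m
    using tq[OF poly_over_const[OF M that]] map_poly_emb_const[of \<sigma>, OF s0, of m] by simp
  have tx: "\<tau> x = y"
  proof -
    have "poly_over M [:0, 1:]" by (intro poly_over_pCons poly_over_const M subfield_C_0 subfield_C_1)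
    from tq[OF this] show ?thesis using map_poly_emb_X[of \<sigma>, OF s0 field_emb_1[OF s]] by simp
  qed
  have hom: "\<tau> (a + b) = \<tau> a + \<tau> b \<and> \<tau> (a * b) = \<tau> a * \<tau> b"
    if ab: "a \<in> adjoin M x" "b \<in> adjoin M x" for a b
  proof -
    obtain q1 q2 where q: "poly_over M q1" "a = poly q1 x" "poly_over M q2" "b = poly q2 x"
      using ab by (metis adjoinE)
    have "\<tau> (a + b) = \<tau> (poly (q1 + q2) x)" using q by simp
    also have "\<dots> = poly (map_poly \<sigma> (q1 + q2)) y" using tq[OF poly_over_add[OF M q(1,3)]] .
    also have "\<dots> = \<tau> a + \<tau> b" using map_poly_emb_add[OF M s q(1,3)] tq[OF q(1)] tq[OF q(3)] q by simp
    finally have 1: "\<tau> (a + b) = \<tau> a + \<tau> b" .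
    have "\<tau> (a * b) = \<tau> (poly (q1 * q2) x)" using q by simp
    also have "\<dots> = poly (map_poly \<sigma> (q1 * q2)) y" using tq[OF poly_over_mult[OF M q(1,3)]] .
    also have "\<dots> = \<tau> a * \<tau> b" using map_poly_emb_mult[OF M s q(1,3)] tq[OF q(1)] tq[OF q(3)] q by simp
    finally show ?thesis using 1 by simp
  qed
  have "field_emb (adjoin M x) \<tau>" unfolding field_emb_def using t1 hom by blast
  then show ?thesis using tM tx by blast
qed

lemma map_poly_min_poly_has_root:
  assumes M: "subfield_C M" and s: "field_emb M \<sigma>" and p: "is_min_poly_over M x p"
  shows "\<exists>y. poly (map_poly \<sigma> p) y = 0"
proof -
  have s0: "\<sigma> 0 = 0" by (rule field_emb_0[OF M s])
  have lc: "lead_coeff p = 1" and dp: "degree p \<ge> 1" using p min_poly_over_degree_pos[OF p] by (auto simp: is_min_poly_over_def)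
  have "coeff (map_poly \<sigma> p) (degree p) = 1" using lc field_emb_1[OF s] by (simp add: coeff_map_poly[of \<sigma>, OF s0])
  then have "degree p \<le> degree (map_poly \<sigma> p)" by (simp add: le_degree)
  then have "degree (map_poly \<sigma> p) \<noteq> 0" using dp by simp
  then have "\<not> constant (poly (map_poly \<sigma> p))" by (simp add: constant_degree)
  then show ?thesis using fundamental_theorem_of_algebra by blast
qed

lemma field_emb_extend_field_gen:
  assumes "finite B"
  shows "subfield_C M \<Longrightarrow> field_emb M \<sigma> \<Longrightarrow> (\<forall>z\<in>field_gen (M \<union> B). algebraic z) \<Longrightarrow>
     \<exists>\<tau>. field_emb (field_gen (M \<union> B)) \<tau> \<and> (\<forall>m\<in>M. \<tau> m = \<sigma> m)"
  using assms
proof (induction B arbitrary: M \<sigma> rule: finite_induct)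
  case empty
  then show ?case using field_gen_subfield_C_eq[of M] by auto
next
  case (insert b B)
  note M = insert.prems(1) and s = insert.prems(2)
  define G where "G = field_gen (M \<union> insert b B)"
  have sG: "subfield_C G" unfolding G_def by (rule field_gen_subfield)
  have MG: "M \<union> insert b B \<subseteq> G" unfolding G_def by (rule field_gen_superset)
  have AG: "adjoin M b \<subseteq> G" by (rule adjoin_least[OF sG]) (use MG in auto)
  have algA: "\<forall>z\<in>adjoin M b. algebraic z" using AG insert.prems(3) unfolding G_def by blast
  have sA: "subfield_C (adjoin M b)" by (rule subfield_C_adjoin[OF M algA])
  have eq: "field_gen (adjoin M b \<union> B) = G"
  proof
    show "field_gen (adjoin M b \<union> B) \<subseteq> G" by (rule field_gen_least[OF sG]) (use AG MG in auto)
    show "G \<subseteq> field_gen (adjoin M b \<union> B)" unfolding G_def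
      by (rule field_gen_least[OF field_gen_subfield])
        (use field_gen_superset[of "adjoin M b \<union> B"] adjoin_superset[OF M] adjoin_generator[OF M, of b] in blast)
  qed
  have "algebraic b" using insert.prems(3) MG unfolding G_def by blast
  then obtain p where p: "is_min_poly_over M b p" using min_poly_over_exists[OF M] by blast
  obtain y where y: "poly (map_poly \<sigma> p) y = 0" using map_poly_min_poly_has_root[OF M s p] by blast
  obtain \<sigma>' where s': "field_emb (adjoin M b) \<sigma>'" "\<forall>m\<in>M. \<sigma>' m = \<sigma> m"
    using field_emb_extend_adjoin[OF M s p y] by blast
  have "\<forall>z\<in>field_gen (adjoin M b \<union> B). algebraic z" using eq insert.prems(3) unfolding G_def by simp
  from insert.IH[OF sA s'(1) this] obtain \<tau> where
    t: "field_emb (field_gen (adjoin M b \<union> B)) \<tau>" "\<forall>m\<in>adjoin M b. \<tau> m = \<sigma>' m" by blast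
  have "\<forall>m\<in>M. \<tau> m = \<sigma> m" using t(2) s'(2) adjoin_superset[OF M, of b] by auto
  moreover have "field_emb (field_gen (M \<union> insert b B)) \<tau>" using t(1) eq unfolding G_def by simp
  ultimately show ?case by blast
qed

lemma field_emb_extend_number_field:
  assumes L: "number_field L" and M: "subfield_C M" "M \<subseteq> L" and s: "field_emb M \<sigma>"
  shows "\<exists>\<tau>. field_emb L \<tau> \<and> (\<forall>m\<in>M. \<tau> m = \<sigma> m)"
proof -
  from L obtain B where B: "finite B" "B \<subseteq> L"
    "\<forall>x\<in>L. \<exists>c. (\<forall>b\<in>B. c b \<in> \<rat>) \<and> x = (\<Sum>b\<in>B. c b * b)"
    and sfL: "subfield_C L" unfolding number_field_def by blast
  have eq: "field_gen (M \<union> B) = L"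
  proof
    show "field_gen (M \<union> B) \<subseteq> L" by (rule field_gen_least[OF sfL]) (use M B in auto)
    show "L \<subseteq> field_gen (M \<union> B)"
    proof
      fix x assume "x \<in> L"
      then obtain c where c: "\<forall>b\<in>B. c b \<in> \<rat>" "x = (\<Sum>b\<in>B. c b * b)" using B by blast
      have G: "subfield_C (field_gen (M \<union> B))" by (rule field_gen_subfield)
      have "(\<Sum>b\<in>B. c b * b) \<in> field_gen (M \<union> B)"
        using c(1) field_gen_superset[of "M \<union> B"] subfield_C_Rats[OF G]
        by (intro subfield_C_sum[OF G] subfield_C_mult[OF G]) auto
      then show "x \<in> field_gen (M \<union> B)" using c(2) by simp
    qed
  qed
  have "\<forall>z\<in>field_gen (M \<union> B). algebraic z" using eq number_field_algebraic[OF L] by simp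
  from field_emb_extend_field_gen[OF B(1) M(1) s this] eq show ?thesis by simp
qed

lemma min_poly_other_root:
  assumes K: "subfield_C K" and p: "is_min_poly_over K \<theta> p" and th: "\<theta> \<notin> K"
  shows "\<exists>\<theta>'. poly p \<theta>' = 0 \<and> \<theta>' \<noteq> \<theta>"
proof (rule ccontr)
  assume H: "\<not> ?thesis"
  have pK: "poly_over K p" and lc: "lead_coeff p = 1" and pt: "poly p \<theta> = 0"
    and mn: "\<forall>q. poly_over K q \<longrightarrow> poly q \<theta> = 0 \<longrightarrow> q = 0 \<or> degree p \<le> degree q"
    using p unfolding is_min_poly_over_def by auto
  have d1: "degree p \<ge> 1" by (rule min_poly_over_degree_pos[OF p])
  have d2: "degree p \<ge> 2"
  proof (rule ccontr)
    assume "\<not> ?thesis"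
    then have dp: "degree p = 1" using d1 by simp
    have "poly p \<theta> = coeff p 0 + coeff p 1 * \<theta>" unfolding poly_altdef dp by simp
    then have "\<theta> = - coeff p 0" using pt lc dp by (simp add: eq_neg_iff_add_eq_0 add.commute)
    moreover have "- coeff p 0 \<in> K" using pK by (simp add: poly_over_def subfield_C_uminus[OF K])
    ultimately show False using th by simp
  qed
  obtain as where as: "Polynomial.smult (coeff p (degree p)) (\<Prod>a\<leftarrow>as. [:- a, 1:]) = p"
    "length as = degree p" using fundamental_theorem_algebra_factorized[of p] by blast
  have pe: "p = (\<Prod>a\<leftarrow>as. [:- a, 1:])" using as(1) lc by simp
  have "\<forall>a\<in>set as. a = \<theta>"
  proof
    fix a assume "a \<in> set as"
    then have "poly p a = 0" unfolding pe by (auto simp: poly_prod_list_zero_iff)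
    then show "a = \<theta>" using H by blast
  qed
  then have "as = replicate (length as) \<theta>" by (simp add: replicate_length_same)
  then have pe2: "p = [:- \<theta>, 1:] ^ degree p" using pe as(2) by (metis map_replicate prod_list_replicate)
  obtain m where m: "degree p = Suc m" "m \<ge> 1" using d2 by (cases "degree p") auto
  have "pderiv p = Polynomial.smult (of_nat (Suc m)) ([:- \<theta>, 1:] ^ m) * pderiv [:- \<theta>, 1:]"
    by (subst pe2, unfold m(1), rule pderiv_power_Suc)
  then have "poly (pderiv p) \<theta> = 0" using m(2) by (simp add: zero_power)
  moreover have "poly_over K (pderiv p)" using pK
    by (auto simp: poly_over_def coeff_pderiv intro!: subfield_C_mult[OF K] subfield_C_add[OF K] subfield_C_1[OF K] subfield_C_of_nat[OF K])
  ultimately have "pderiv p = 0 \<or> degree p \<le> degree (pderiv p)" using mn by blast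
  moreover have "pderiv p \<noteq> 0" using d1 by (simp add: pderiv_eq_0_iff)
  moreover have "degree (pderiv p) < degree p" using d1 by (simp add: degree_pderiv)
  ultimately show False by simp
qed

lemma field_emb_moving:
  assumes L: "number_field L" and K: "subfield_C K" "K \<subseteq> L" and th: "\<theta> \<in> L" "\<theta> \<notin> K"
  shows "\<exists>\<tau>. field_emb L \<tau> \<and> (\<forall>k\<in>K. \<tau> k = k) \<and> \<tau> \<theta> \<noteq> \<theta>"
proof -
  have "algebraic \<theta>" using number_field_algebraic[OF L th(1)] .
  then obtain p where p: "is_min_poly_over K \<theta> p" using min_poly_over_exists[OF K(1)] by blast
  obtain \<theta>' where t': "poly p \<theta>' = 0" "\<theta>' \<noteq> \<theta>" using min_poly_other_root[OF K(1) p th(2)] by blast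
  have sid: "field_emb K (\<lambda>z. z)" by (simp add: field_emb_def)
  have "map_poly (\<lambda>z. z) p = p" by (simp add: map_poly_idI)
  then obtain \<tau>0 where t0: "field_emb (adjoin K \<theta>) \<tau>0" "\<forall>m\<in>K. \<tau>0 m = m" "\<tau>0 \<theta> = \<theta>'"
    using field_emb_extend_adjoin[OF K(1) sid p, of \<theta>'] t'(1) by auto
  have sfL: "subfield_C L" using L by (simp add: number_field_def)
  have AL: "adjoin K \<theta> \<subseteq> L" by (rule adjoin_least[OF sfL K(2) th(1)])
  have sA: "subfield_C (adjoin K \<theta>)"
    by (rule subfield_C_adjoin[OF K(1)]) (use AL number_field_algebraic[OF L] in blast)
  obtain \<tau> where t: "field_emb L \<tau>" "\<forall>m\<in>adjoin K \<theta>. \<tau> m = \<tau>0 m"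
    using field_emb_extend_number_field[OF L sA AL t0(1)] by blast
  have "\<tau> \<theta> = \<theta>'" using t(2) t0(3) adjoin_generator[OF K(1), of \<theta>] by simp
  moreover have "\<forall>k\<in>K. \<tau> k = k" using t(2) t0(2) adjoin_superset[OF K(1), of \<theta>] by auto
  ultimately show ?thesis using t(1) t'(2) by blast
qed

lemma subfield_fixed_by_id_or_cnj_cases:
  assumes E: "number_field E" and K: "subfield_C K" "K \<subseteq> E"
    and fixers: "\<And>\<tau>. field_emb E \<tau> \<Longrightarrow> \<forall>k\<in>K. \<tau> k = k \<Longrightarrow>
      (\<forall>x\<in>E. \<tau> x = x) \<or> (\<forall>x\<in>E. \<tau> x = cnj x)"
  shows "K = E \<or> K = E \<inter> \<real>"
proof (cases "K \<subseteq> \<real>")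
  case True
  show ?thesis
  proof (rule ccontr)
    assume "\<not> ?thesis"
    then obtain \<theta> where \<theta>: "\<theta> \<in> E" "\<theta> \<in> \<real>" "\<theta> \<notin> K" using True K(2) by blast
    obtain \<tau> where \<tau>: "field_emb E \<tau>" "\<forall>k\<in>K. \<tau> k = k" "\<tau> \<theta> \<noteq> \<theta>"
      using field_emb_moving[OF E K \<theta>(1,3)] by blast
    show False using fixers[OF \<tau>(1,2)] \<tau>(3) \<theta>(1,2) by (auto simp: Reals_cnj_iff)
  qed
next
  case False
  then obtain k where "k \<in> K" "k \<notin> \<real>" by blast
  then have k: "k \<in> K" "cnj k \<noteq> k" by (auto simp: Reals_cnj_iff)
  show ?thesis
  proof (rule ccontr)
    assume "\<not> ?thesis"
    then obtain \<theta> where \<theta>: "\<theta> \<in> E" "\<theta> \<notin> K" using K(2) by blast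
    obtain \<tau> where \<tau>: "field_emb E \<tau>" "\<forall>k\<in>K. \<tau> k = k" "\<tau> \<theta> \<noteq> \<theta>"
      using field_emb_moving[OF E K \<theta>] by blast
    \<comment> \<open>\<tau> moves \<theta>, so it is complex conjugation on E; but it fixes the non-real k\<close>
    show False using fixers[OF \<tau>(1,2)] \<tau>(2,3) \<theta>(1) k K(2) by force
  qed
qed

section \<open>Bounded power sums\<close>

lemma geometric_Cesaro_mean_tendsto:
  fixes \<rho> :: complex
  assumes "norm \<rho> \<le> 1"
  shows "(\<lambda>N. (\<Sum>k<N. \<rho> ^ k) / of_nat N) \<longlonglongrightarrow> (if \<rho> = 1 then 1 else 0)"
proof (cases "\<rho> = 1")
  case True
  have "eventually (\<lambda>N. (\<Sum>k<N. \<rho> ^ k) / of_nat N = 1) sequentially"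
    using eventually_gt_at_top[of 0] by eventually_elim (simp add: True)
  then show ?thesis using True by (simp add: tendsto_eventually)
next
  case False
  define K where "K = 2 / norm (1 - \<rho>)"
  have bound: "norm ((\<Sum>k<N. \<rho> ^ k) / of_nat N) \<le> K / real N" for N
  proof -
    have "(\<Sum>k<N. \<rho> ^ k) = (1 - \<rho> ^ N) / (1 - \<rho>)" using False by (simp add: sum_gp_strict)
    moreover have "norm (1 - \<rho> ^ N) \<le> 2"
    proof -
      have "norm (1 - \<rho> ^ N) \<le> norm (1::complex) + norm (\<rho> ^ N)" by (rule norm_triangle_ineq4)
      also have "norm (\<rho> ^ N) \<le> 1" using assms by (simp add: norm_power power_le_one)
      finally show ?thesis by simp
    qed
    ultimately have "norm (\<Sum>k<N. \<rho> ^ k) \<le> K" using False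
      by (simp add: K_def norm_divide divide_right_mono)
    then show ?thesis by (simp add: norm_divide divide_right_mono)
  qed
  have "(\<lambda>N. K / real N) \<longlonglongrightarrow> 0" by (rule lim_const_over_n)
  then have "(\<lambda>N. (\<Sum>k<N. \<rho> ^ k) / of_nat N) \<longlonglongrightarrow> 0"
    by (rule Lim_null_comparison[rotated]) (use bound in auto)
  then show ?thesis using False by simp
qed

lemma Cesaro_mean_tendsto_0_if_geometric_bound:
  fixes a :: "nat \<Rightarrow> complex"
  assumes bound: "\<And>k. norm (a k) \<le> C * x ^ k" and x: "0 < x" "x < 1"
  shows "(\<lambda>N. (\<Sum>k<N. a k) / of_nat N) \<longlonglongrightarrow> 0"
proof -
  have C: "C \<ge> 0" using order_trans[OF norm_ge_zero bound[of 0]] by simp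
  have bound_mean: "norm ((\<Sum>k<N. a k) / of_nat N) \<le> C / (1 - x) / real N" for N
  proof -
    have "norm (\<Sum>k<N. a k) \<le> (\<Sum>k<N. C * x ^ k)" by (rule sum_norm_le) (rule bound)
    also have "\<dots> = C * (\<Sum>k<N. x ^ k)" by (simp add: sum_distrib_left)
    also have "\<dots> \<le> C * (1 / (1 - x))"
      using geometric_sum_less[OF x, of "{..<N}"] C by (intro mult_left_mono) auto
    finally have "norm (\<Sum>k<N. a k) \<le> C / (1 - x)" by simp
    then show ?thesis unfolding norm_divide norm_of_nat by (rule divide_right_mono) simp
  qed
  have "(\<lambda>N. C / (1 - x) / real N) \<longlonglongrightarrow> 0" by (rule lim_const_over_n)
  then show ?thesis by (rule Lim_null_comparison[rotated]) (use bound_mean in auto)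
qed

lemma norm_le_one_if_power_sums_bounded:
  fixes l :: "nat \<Rightarrow> complex"
  assumes C: "\<And>k. norm (\<Sum>i<n. l i ^ k) \<le> C" and j: "j < n"
  shows "norm (l j) \<le> 1"
proof (rule ccontr)
  assume "\<not> ?thesis"
  define R where "R = Max ((\<lambda>i. norm (l i)) ` {..<n})"
  have Rge: "norm (l i) \<le> R" if "i < n" for i unfolding R_def using that by (intro Max_ge) auto
  have R1: "R > 1" using Rge[OF j] \<open>\<not> norm (l j) \<le> 1\<close> by simp
  have "R \<in> (\<lambda>i. norm (l i)) ` {..<n}" unfolding R_def using j by (intro Max_in) auto
  then obtain i0 where i0: "i0 < n" "norm (l i0) = R" by auto
  \<comment> \<open>rescale so that the largest value becomes 1 and all others lie in the closed unit disc\<close>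
  define \<mu> where "\<mu> = cnj (l i0) / of_real R / of_real R"
  define \<rho> where "\<rho> i = l i * \<mu>" for i
  have n\<mu>: "norm \<mu> = 1 / R" using i0 R1 by (simp add: \<mu>_def norm_divide norm_mult abs_of_pos field_simps)
  have n\<rho>: "norm (\<rho> i) \<le> 1" if "i < n" for i
    using Rge[OF that] R1 by (simp add: \<rho>_def n\<mu> norm_mult divide_le_eq_1)
  have \<rho>0: "\<rho> i0 = 1"
  proof -
    have "l i0 * cnj (l i0) = of_real (R ^ 2)" using complex_norm_square[of "l i0"] i0(2) by simp
    then show ?thesis using R1 by (simp add: \<rho>_def \<mu>_def power2_eq_square field_simps)
  qed
  have mean: "(\<Sum>k<N. \<Sum>i<n. \<rho> i ^ k) / of_nat N = (\<Sum>i<n. (\<Sum>k<N. \<rho> i ^ k) / of_nat N)" for N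
    by (simp add: sum.swap[of _ "{..<N}"] sum_divide_distrib)
  have "(\<lambda>N. (\<Sum>k<N. \<Sum>i<n. \<rho> i ^ k) / of_nat N) \<longlonglongrightarrow> (\<Sum>i<n. if \<rho> i = 1 then 1 else 0)"
    unfolding mean by (intro tendsto_sum geometric_Cesaro_mean_tendsto n\<rho>) auto
  moreover have "(\<lambda>N. (\<Sum>k<N. \<Sum>i<n. \<rho> i ^ k) / of_nat N) \<longlonglongrightarrow> 0"
  proof (rule Cesaro_mean_tendsto_0_if_geometric_bound)
    fix k
    have "(\<Sum>i<n. \<rho> i ^ k) = (\<Sum>i<n. l i ^ k) * \<mu> ^ k"
      by (simp add: \<rho>_def power_mult_distrib sum_distrib_right)
    then have "norm (\<Sum>i<n. \<rho> i ^ k) = norm (\<Sum>i<n. l i ^ k) * (1 / R) ^ k"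
      by (simp add: norm_mult norm_power n\<mu>)
    also have "\<dots> \<le> C * (1 / R) ^ k" using C[of k] R1 by (intro mult_right_mono) auto
    finally show "norm (\<Sum>i<n. \<rho> i ^ k) \<le> C * (1 / R) ^ k" .
  qed (use R1 in auto)
  ultimately have "(\<Sum>i<n. if \<rho> i = 1 then 1 else 0) = (0::complex)" by (rule LIMSEQ_unique)
  then have "Re (\<Sum>i<n. if \<rho> i = 1 then 1 else 0) = 0" by simp
  moreover have "Re (\<Sum>i<n. if \<rho> i = 1 then 1 else (0::complex)) \<ge> 1"
  proof -
    have "Re (\<Sum>i<n. if \<rho> i = 1 then 1 else (0::complex)) = (\<Sum>i<n. if \<rho> i = 1 then 1 else 0)"
      unfolding Re_sum by (intro sum.cong refl) auto
    also have "\<dots> \<ge> (if \<rho> i0 = 1 then 1 else 0)" by (rule member_le_sum) (use i0 in auto)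
    finally show ?thesis using \<rho>0 by simp
  qed
  ultimately show False by simp
qed

section \<open>Traces of powers of a matrix\<close>

(* An arbitrary enumeration of the index type, to transfer matrices to Jordan_Normal_Form,
   where Schur decomposition is available. *)
definition idx :: "nat \<Rightarrow> 'n::finite" where
  "idx = (SOME h. bij_betw h {0..<CARD('n)} (UNIV::'n set))"

lemma idx_bij: "bij_betw (idx :: nat \<Rightarrow> 'n::finite) {0..<CARD('n)} UNIV"
proof -
  have "\<exists>h. bij_betw h {0..<CARD('n)} (UNIV::'n set)" by (rule ex_bij_betw_nat_finite) simp
  then show ?thesis unfolding idx_def by (rule someI_ex)
qed

lemma sum_idx: "(\<Sum>k\<in>(UNIV::'n::finite set). f k) = (\<Sum>l\<in>{0..<CARD('n)}. f (idx l))"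
  by (rule sum.reindex_bij_betw[OF idx_bij, symmetric])

lemma idx_inj_iff: "i < CARD('n::finite) \<Longrightarrow> j < CARD('n) \<Longrightarrow> (idx i :: 'n) = idx j \<longleftrightarrow> i = j"
  using idx_bij[where 'n='n] unfolding bij_betw_def inj_on_def by auto

lemma idx_surj: "\<exists>l < CARD('n::finite). (idx l :: 'n) = k"
  using idx_bij[where 'n='n] unfolding bij_betw_def by (metis UNIV_I atLeastLessThan_iff imageE)

definition to_mat :: "complex^'n::finite^'n \<Rightarrow> complex Matrix.mat" where
  "to_mat A = Matrix.mat CARD('n) CARD('n) (\<lambda>(i,j). A $ idx i $ idx j)"

lemma to_mat_carrier: "to_mat (A :: complex^'n::finite^'n) \<in> carrier_mat CARD('n) CARD('n)"
  by (simp add: to_mat_def)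

lemma to_mat_dims[simp]: "dim_row (to_mat (A :: complex^'n::finite^'n)) = CARD('n)"
  "dim_col (to_mat (A :: complex^'n::finite^'n)) = CARD('n)"
  by (simp_all add: to_mat_def)

lemma to_mat_index: "i < CARD('n::finite) \<Longrightarrow> j < CARD('n) \<Longrightarrow> to_mat (A :: complex^'n^'n) $$ (i,j) = A $ idx i $ idx j"
  by (simp add: to_mat_def)

lemma to_mat_mult: "to_mat ((A :: complex^'n::finite^'n) ** B) = to_mat A * to_mat B"
proof (rule eq_matI)
  fix i j assume ij: "i < dim_row (to_mat A * to_mat B)" "j < dim_col (to_mat A * to_mat B)"
  then have ij': "i < CARD('n)" "j < CARD('n)" by auto
  have "(to_mat A * to_mat B) $$ (i, j) = (\<Sum>l\<in>{0..<CARD('n)}. to_mat A $$ (i,l) * to_mat B $$ (l,j))"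
    using ij' by (simp add: scalar_prod_def)
  also have "\<dots> = (\<Sum>l\<in>{0..<CARD('n)}. A $ idx i $ idx l * B $ idx l $ idx j)"
    using ij' by (intro sum.cong refl) (simp add: to_mat_index)
  also have "\<dots> = (A ** B) $ idx i $ idx j"
    by (simp add: matrix_matrix_mult_def sum_idx)
  also have "\<dots> = to_mat (A ** B) $$ (i,j)" using ij' by (simp add: to_mat_index)
  finally show "to_mat (A ** B) $$ (i, j) = (to_mat A * to_mat B) $$ (i, j)" by simp
qed auto

lemma to_mat_one: "to_mat (Finite_Cartesian_Product.mat 1 :: complex^'n::finite^'n) = 1\<^sub>m CARD('n)"
  by (rule eq_matI) (auto simp: to_mat_index Finite_Cartesian_Product.mat_def idx_inj_iff)

fun matrix_pow :: "complex^'n::finite^'n \<Rightarrow> nat \<Rightarrow> complex^'n^'n" where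
  "matrix_pow g 0 = Finite_Cartesian_Product.mat 1"
| "matrix_pow g (Suc k) = matrix_pow g k ** g"

lemma to_mat_matrix_pow: "to_mat (matrix_pow g k) = to_mat g ^\<^sub>m k"
  by (induction k) (simp_all add: to_mat_one to_mat_mult)

definition mat_trace :: "complex Matrix.mat \<Rightarrow> complex" where
  "mat_trace X = (\<Sum>l\<in>{0..<dim_row X}. X $$ (l,l))"

lemma trace_to_mat: "trace (A :: complex^'n::finite^'n) = mat_trace (to_mat A)"
  unfolding trace_def mat_trace_def sum_idx by (intro sum.cong refl) (auto simp: to_mat_index)

lemma mat_trace_mult_commute:
  assumes X: "X \<in> carrier_mat n n" and Y: "Y \<in> carrier_mat n n"
  shows "mat_trace (X * Y) = mat_trace (Y * X)"
proof -
  have "mat_trace (X * Y) = (\<Sum>l\<in>{0..<n}. \<Sum>m\<in>{0..<n}. X $$ (l,m) * Y $$ (m,l))"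
    using X Y unfolding mat_trace_def by (intro sum.cong refl) (auto simp: scalar_prod_def)
  also have "\<dots> = (\<Sum>m\<in>{0..<n}. \<Sum>l\<in>{0..<n}. Y $$ (m,l) * X $$ (l,m))"
    by (subst sum.swap) (simp add: mult.commute)
  also have "\<dots> = mat_trace (Y * X)"
    using X Y unfolding mat_trace_def by (intro sum.cong refl) (auto simp: scalar_prod_def)
  finally show ?thesis .
qed

lemma upper_triangular_mult_diag:
  assumes X: "X \<in> carrier_mat n n" and Y: "Y \<in> carrier_mat n n"
    and uX: "upper_triangular X" and uY: "upper_triangular Y"
  shows "upper_triangular (X * Y) \<and> (\<forall>i<n. (X * Y) $$ (i,i) = X $$ (i,i) * Y $$ (i,i))"
proof
  have e: "(X * Y) $$ (i,j) = (\<Sum>m\<in>{0..<n}. X $$ (i,m) * Y $$ (m,j))" if "i < n" "j < n" for i j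
    using X Y that by (simp add: scalar_prod_def)
  show "upper_triangular (X * Y)"
  proof (rule upper_triangularI)
    fix i j assume ij: "j < i" "i < dim_row (X * Y)"
    then have "i < n" "j < n" using X by auto
    have "X $$ (i,m) * Y $$ (m,j) = 0" if "m < n" for m
    proof (cases "m < i")
      case True then show ?thesis using uX X \<open>i < n\<close> by (simp add: upper_triangular_def)
    next
      case False then have "j < m" using ij by simp
      then show ?thesis using uY Y that by (simp add: upper_triangular_def)
    qed
    then show "(X * Y) $$ (i,j) = 0" using e[OF \<open>i < n\<close> \<open>j < n\<close>] by simp
  qed
  show "\<forall>i<n. (X * Y) $$ (i,i) = X $$ (i,i) * Y $$ (i,i)"
  proof (intro allI impI)
    fix i assume i: "i < n"
    have z: "X $$ (i,m) * Y $$ (m,i) = 0" if "m < n" "m \<noteq> i" for m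
    proof (cases "m < i")
      case True then show ?thesis using uX X i by (simp add: upper_triangular_def)
    next
      case False then have "i < m" using that by simp
      then show ?thesis using uY Y that by (simp add: upper_triangular_def)
    qed
    have "(X * Y) $$ (i,i) = (\<Sum>m\<in>{0..<n}. X $$ (i,m) * Y $$ (m,i))" using e[OF i i] .
    also have "\<dots> = X $$ (i,i) * Y $$ (i,i)"
      by (subst sum.remove[of _ i]) (use i z in auto)
    finally show "(X * Y) $$ (i,i) = X $$ (i,i) * Y $$ (i,i)" .
  qed
qed

lemma upper_triangular_pow_diag:
  assumes B: "B \<in> carrier_mat n n" and uB: "upper_triangular B"
  shows "upper_triangular (B ^\<^sub>m k) \<and> (\<forall>i<n. (B ^\<^sub>m k) $$ (i,i) = B $$ (i,i) ^ k)"
proof (induction k)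
  case 0 then show ?case using B by auto
next
  case (Suc k)
  have Bk: "B ^\<^sub>m k \<in> carrier_mat n n" using B by simp
  from upper_triangular_mult_diag[OF Bk B _ uB] Suc
  have "upper_triangular (B ^\<^sub>m Suc k)" "\<forall>i<n. (B ^\<^sub>m Suc k) $$ (i,i) = B $$ (i,i) ^ k * B $$ (i,i)"
    by auto
  then show ?case by (metis power_Suc2)
qed

lemma to_mat_eigenvalue:
  fixes g :: "complex^'n::finite^'n"
  assumes "g *v v = c *s v" "v \<noteq> 0"
  shows "eigenvalue (to_mat g) c"
proof -
  define w where "w = Matrix.vec CARD('n) (\<lambda>i. v $ idx i)"
  have "to_mat g *\<^sub>v w = c \<cdot>\<^sub>v w"
  proof (rule eq_vecI)
    fix i assume "i < dim_vec (c \<cdot>\<^sub>v w)"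
    then have i: "i < CARD('n)" by (simp add: w_def)
    have "(to_mat g *\<^sub>v w) $ i = (\<Sum>l\<in>{0..<CARD('n)}. g $ idx i $ idx l * v $ idx l)"
      using i unfolding w_def by (simp add: scalar_prod_def to_mat_index)
    also have "\<dots> = (g *v v) $ idx i" by (simp add: matrix_vector_mult_def sum_idx)
    also have "\<dots> = (c \<cdot>\<^sub>v w) $ i" using assms(1) i by (simp add: w_def)
    finally show "(to_mat g *\<^sub>v w) $ i = (c \<cdot>\<^sub>v w) $ i" .
  qed (simp add: w_def)
  moreover have "w \<noteq> 0\<^sub>v CARD('n)"
  proof
    assume w0: "w = 0\<^sub>v CARD('n)"
    obtain k where k: "v $ k \<noteq> 0"
      using assms(2) by (metis Finite_Cartesian_Product.vec_eq_iff Finite_Cartesian_Product.zero_index)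
    obtain l where "l < CARD('n)" "idx l = k" using idx_surj[of k] by blast
    then show False using w0 k by (metis index_vec index_zero_vec(1) w_def)
  qed
  moreover have "w \<in> carrier_vec CARD('n)" by (simp add: w_def)
  ultimately show ?thesis unfolding eigenvalue_def eigenvector_def by auto
qed

lemma mat_trace_pow_similar_upper_triangular:
  assumes A: "A \<in> carrier_mat n n" and sim: "similar_mat_wit A B P Q" and uB: "upper_triangular B"
  shows "mat_trace (A ^\<^sub>m k) = (\<Sum>i<n. (B $$ (i,i)) ^ k)"
proof -
  from similar_mat_witD2[OF A sim] have QP: "Q * P = 1\<^sub>m n" and B: "B \<in> carrier_mat n n"
    and P: "P \<in> carrier_mat n n" and Q: "Q \<in> carrier_mat n n" by auto
  have Bk: "B ^\<^sub>m k \<in> carrier_mat n n" using B by simp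
  have "A ^\<^sub>m k = P * B ^\<^sub>m k * Q" by (rule similar_mat_wit_pow_id[OF sim])
  also have "mat_trace (P * B ^\<^sub>m k * Q) = mat_trace (Q * (P * B ^\<^sub>m k))"
    using P Q Bk by (intro mat_trace_mult_commute) auto
  also have "Q * (P * B ^\<^sub>m k) = (Q * P) * B ^\<^sub>m k" using P Q Bk by simp
  also have "\<dots> = B ^\<^sub>m k" using QP Bk by (simp add: left_mult_one_mat)
  also have "mat_trace (B ^\<^sub>m k) = (\<Sum>i<n. (B $$ (i,i)) ^ k)"
    unfolding mat_trace_def using B Bk upper_triangular_pow_diag[OF B uB, of k]
    by (auto simp: atLeast0LessThan intro!: sum.cong)
  finally show ?thesis .
qed

lemma eigenvalue_norm_le_one_if_power_traces_bounded:
  fixes g :: "complex^'n::finite^'n"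
  assumes ev: "g *v v = c *s v" "v \<noteq> 0" and bd: "\<And>k. norm (trace (matrix_pow g k)) \<le> C"
  shows "norm c \<le> 1"
proof -
  define A where "A = to_mat g"
  have A: "A \<in> carrier_mat CARD('n) CARD('n)" unfolding A_def by (rule to_mat_carrier)
  have "poly (char_poly A) c = 0"
    using eigenvalue_root_char_poly[OF A] to_mat_eigenvalue[OF ev] unfolding A_def by simp
  obtain es where es: "char_poly A = (\<Prod>a\<leftarrow>es. [:- a, 1:])" "length es = CARD('n)"
    using char_poly_factorized[OF A] by blast
  obtain B P Q where sd: "schur_decomposition A es = (B,P,Q)" by (cases "schur_decomposition A es") auto
  from schur_decomposition[OF A es(1) sd]
  have sim: "similar_mat_wit A B P Q" and uB: "upper_triangular B" and dB: "diag_mat B = es" by auto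
  have B: "B \<in> carrier_mat CARD('n) CARD('n)" using similar_mat_witD2[OF A sim] by auto
  have "c \<in> set es" using \<open>poly (char_poly A) c = 0\<close> unfolding es(1) by (auto simp: poly_prod_list_zero_iff)
  then obtain j where j: "j < CARD('n)" "c = B $$ (j,j)" using dB B unfolding diag_mat_def by auto
  have "trace (matrix_pow g k) = (\<Sum>i<CARD('n). (B $$ (i,i)) ^ k)" for k
    unfolding trace_to_mat to_mat_matrix_pow A_def[symmetric]
    by (rule mat_trace_pow_similar_upper_triangular[OF A sim uB])
  then show ?thesis
    using norm_le_one_if_power_sums_bounded[where l = "\<lambda>i. B $$ (i,i)" and C = C] bd j by auto
qed

section \<open>CM fields and twisted unitary groups\<close>

lemma cnj_eq_minus_if_square_real:
  fixes z :: complex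
  assumes "z * z \<in> \<real>" "z \<notin> \<real>"
  shows "cnj z = - z"
proof -
  have "Im z \<noteq> 0" using assms(2) by (simp add: complex_is_Real_iff)
  moreover have "Im (z * z) = 0" using assms(1) by (simp add: complex_is_Real_iff)
  ultimately have "Re z = 0" by simp
  then show ?thesis by (simp add: complex_eq_iff)
qed

lemma quadratic_ext_square_root_generator:
  assumes sE: "subfield_C E" and sF: "subfield_C F" and q: "quadratic_ext E F" and FE: "F = E \<inter> \<real>"
  obtains \<beta> where "\<beta> \<in> E" "\<beta> \<notin> \<real>" "\<beta> * \<beta> \<in> F"
    "\<And>x. x \<in> E \<Longrightarrow> \<exists>a b. a \<in> F \<and> b \<in> F \<and> x = a + b * \<beta>"
proof -
  from q obtain \<alpha> where al: "F \<subseteq> E" "\<alpha> \<in> E" "\<alpha> \<notin> F" "E = {a + b * \<alpha> | a b. a \<in> F \<and> b \<in> F}"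
    unfolding quadratic_ext_def by blast
  have "\<alpha> * \<alpha> \<in> E" using subfield_C_mult[OF sE al(2) al(2)] .
  then obtain p qq where pq: "p \<in> F" "qq \<in> F" "\<alpha> * \<alpha> = p + qq * \<alpha>" using al(4) by blast
  \<comment> \<open>complete the square\<close>
  define \<beta> where "\<beta> = \<alpha> - qq / 2"
  have q2: "qq / 2 \<in> F" using subfield_C_divide[OF sF pq(2) subfield_C_of_nat[OF sF, of 2]] by simp
  have "\<beta> \<in> E" unfolding \<beta>_def using al(1,2) q2 by (intro subfield_C_diff[OF sE]) auto
  moreover have "\<beta> \<notin> \<real>"
  proof
    assume "\<beta> \<in> \<real>"
    then have "\<beta> + qq / 2 \<in> F" using \<open>\<beta> \<in> E\<close> FE q2 subfield_C_add[OF sF] by blast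
    then show False using al(3) by (simp add: \<beta>_def)
  qed
  moreover have "\<beta> * \<beta> \<in> F"
  proof -
    have "\<beta> * \<beta> = p + qq * qq / 4" using pq(3) by (simp add: \<beta>_def algebra_simps power2_eq_square)
    moreover have "p + qq * qq / 4 \<in> F" using pq subfield_C_of_nat[OF sF, of 4]
      by (intro subfield_C_add[OF sF] subfield_C_divide[OF sF] subfield_C_mult[OF sF]) auto
    ultimately show ?thesis by simp
  qed
  moreover have "\<exists>a b. a \<in> F \<and> b \<in> F \<and> x = a + b * \<beta>" if x: "x \<in> E" for x
  proof -
    obtain a b where ab: "a \<in> F" "b \<in> F" "x = a + b * \<alpha>" using x al(4) by blast
    have "a + b * (qq / 2) \<in> F" using ab q2 by (intro subfield_C_add[OF sF] subfield_C_mult[OF sF]) auto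
    moreover have "x = (a + b * (qq / 2)) + b * \<beta>" using ab(3) by (simp add: \<beta>_def algebra_simps)
    ultimately show ?thesis using ab(2) by blast
  qed
  ultimately show thesis using that by blast
qed

lemma CM_field_emb_cnj_commute:
  assumes sE: "subfield_C E" and sF: "subfield_C F" and tr: "totally_real F"
    and ti: "totally_imaginary E" and q: "quadratic_ext E F" and FE: "F = E \<inter> \<real>"
    and t: "field_emb E \<tau>"
  shows "\<forall>x\<in>E. cnj x \<in> E \<and> \<tau> (cnj x) = cnj (\<tau> x)"
proof -
  obtain \<beta> where \<beta>: "\<beta> \<in> E" "\<beta> \<notin> \<real>" "\<beta> * \<beta> \<in> F"
    and rep: "\<And>x. x \<in> E \<Longrightarrow> \<exists>a b. a \<in> F \<and> b \<in> F \<and> x = a + b * \<beta>"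
    using quadratic_ext_square_root_generator[OF sE sF q FE] by blast
  have FsE: "F \<subseteq> E" and FR: "F \<subseteq> \<real>" using FE by auto
  have tFR: "\<tau> a \<in> \<real>" if "a \<in> F" for a
    using tr t FsE that unfolding totally_real_def field_emb_def by blast
  have t_rep: "\<tau> (a + b * \<beta>) = \<tau> a + \<tau> b * \<tau> \<beta>" if "a \<in> F" "b \<in> F" for a b
  proof -
    have "a \<in> E" "b \<in> E" "b * \<beta> \<in> E" using that FsE \<beta>(1) subfield_C_mult[OF sE] by auto
    then show ?thesis using field_emb_add[OF t] field_emb_mult[OF t] \<beta>(1) by simp
  qed
  have "\<tau> \<beta> \<notin> \<real>"
  proof
    assume "\<tau> \<beta> \<in> \<real>"
    then have "\<tau> ` E \<subseteq> \<real>" using rep t_rep tFR by fastforce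
    then show False using ti t unfolding totally_imaginary_def by blast
  qed
  moreover have "\<tau> \<beta> * \<tau> \<beta> \<in> \<real>"
    using field_emb_mult[OF t \<beta>(1) \<beta>(1)] tFR[OF \<beta>(3)] by simp
  ultimately have c\<tau>\<beta>: "cnj (\<tau> \<beta>) = - \<tau> \<beta>" using cnj_eq_minus_if_square_real by blast
  have c\<beta>: "cnj \<beta> = - \<beta>" using cnj_eq_minus_if_square_real \<beta>(2,3) FR by blast
  show ?thesis
  proof
    fix x assume "x \<in> E"
    then obtain a b where ab: "a \<in> F" "b \<in> F" "x = a + b * \<beta>" using rep by blast
    have mb: "- b \<in> F" using subfield_C_uminus[OF sF ab(2)] .
    have "cnj a = a" "cnj b = b" using ab FR by (auto simp: Reals_cnj_iff)
    then have cx: "cnj x = a + (- b) * \<beta>" using ab(3) c\<beta> by simp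
    have "cnj x \<in> E" unfolding cx using FsE ab(1) mb \<beta>(1)
      by (intro subfield_C_add[OF sE] subfield_C_mult[OF sE]) auto
    moreover have "\<tau> (cnj x) = cnj (\<tau> x)"
      using t_rep[OF ab(1) mb] t_rep[OF ab(1,2)] field_emb_uminus[OF sE t, of b] ab FsE
        tFR[OF ab(1)] tFR[OF ab(2)] c\<tau>\<beta> unfolding cx by (auto simp: Reals_cnj_iff)
    ultimately show "cnj x \<in> E \<and> \<tau> (cnj x) = cnj (\<tau> x)" by blast
  qed
qed

definition mat_over :: "complex set \<Rightarrow> complex^'n^'n \<Rightarrow> bool" where
  "mat_over E A \<longleftrightarrow> (\<forall>i j. A $ i $ j \<in> E)"

lemma mat_over_mult: "subfield_C E \<Longrightarrow> mat_over E A \<Longrightarrow> mat_over E B \<Longrightarrow> mat_over E (A ** B)"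
  unfolding mat_over_def matrix_matrix_mult_def by (auto intro!: subfield_C_sum subfield_C_mult)

lemma mat_over_cadj: "\<forall>x\<in>E. cnj x \<in> E \<Longrightarrow> mat_over E A \<Longrightarrow> mat_over E (cadj A)"
  unfolding mat_over_def cadj_def by auto

lemma emb_mat_mult:
  assumes M: "subfield_C E" and s: "field_emb E \<tau>" and A: "mat_over E A" and B: "mat_over E B"
  shows "emb_mat \<tau> (A ** B) = emb_mat \<tau> A ** emb_mat \<tau> B"
proof -
  have "\<tau> (\<Sum>k\<in>UNIV. A $ i $ k * B $ k $ j) = (\<Sum>k\<in>UNIV. \<tau> (A $ i $ k) * \<tau> (B $ k $ j))" for i j
  proof -
    have "\<tau> (\<Sum>k\<in>UNIV. A $ i $ k * B $ k $ j) = (\<Sum>k\<in>UNIV. \<tau> (A $ i $ k * B $ k $ j))"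
      using A B unfolding mat_over_def by (intro field_emb_sum[OF M s] subfield_C_mult[OF M]) auto
    also have "\<dots> = (\<Sum>k\<in>UNIV. \<tau> (A $ i $ k) * \<tau> (B $ k $ j))"
      using A B unfolding mat_over_def by (intro sum.cong refl field_emb_mult[OF s]) auto
    finally show ?thesis .
  qed
  then show ?thesis unfolding emb_mat_def matrix_matrix_mult_def
    by (simp add: Finite_Cartesian_Product.vec_eq_iff)
qed

lemma emb_mat_cadj:
  assumes c: "\<forall>x\<in>E. cnj x \<in> E \<and> \<tau> (cnj x) = cnj (\<tau> x)" and A: "mat_over E A"
  shows "emb_mat \<tau> (cadj A) = cadj (emb_mat \<tau> A)"
  using c A unfolding emb_mat_def cadj_def mat_over_def by (simp add: Finite_Cartesian_Product.vec_eq_iff)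

lemma det_emb_mat:
  assumes M: "subfield_C E" and s: "field_emb E \<tau>" and A: "mat_over E A"
  shows "Determinants.det (emb_mat \<tau> A) = \<tau> (Determinants.det A)"
proof -
  have pin: "(\<Prod>i\<in>UNIV. A $ i $ p i) \<in> E" for p using A unfolding mat_over_def by (intro subfield_C_prod[OF M]) auto
  have "\<tau> (Determinants.det A) = (\<Sum>p\<in>{p. p permutes UNIV}. \<tau> (of_int (sign p) * (\<Prod>i\<in>UNIV. A $ i $ p i)))"
    unfolding Determinants.det_def using pin by (intro field_emb_sum[OF M s] subfield_C_mult[OF M] subfield_C_of_int[OF M]) auto
  also have "\<dots> = (\<Sum>p\<in>{p. p permutes UNIV}. of_int (sign p) * (\<Prod>i\<in>UNIV. \<tau> (A $ i $ p i)))"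
  proof (intro sum.cong refl)
    fix p
    have "\<tau> (of_int (sign p) * (\<Prod>i\<in>UNIV. A $ i $ p i)) = \<tau> (of_int (sign p)) * \<tau> (\<Prod>i\<in>UNIV. A $ i $ p i)"
      by (rule field_emb_mult[OF s subfield_C_of_int[OF M] pin])
    also have "\<dots> = of_int (sign p) * (\<Prod>i\<in>UNIV. \<tau> (A $ i $ p i))"
      using A field_emb_of_int[OF M s] unfolding mat_over_def by (simp add: field_emb_prod[OF M s])
    finally show "\<tau> (of_int (sign p) * (\<Prod>i\<in>UNIV. A $ i $ p i)) = of_int (sign p) * (\<Prod>i\<in>UNIV. \<tau> (A $ i $ p i))" .
  qed
  also have "\<dots> = Determinants.det (emb_mat \<tau> A)" unfolding Determinants.det_def emb_mat_def by simp
  finally show ?thesis by simp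
qed

lemma trace_emb_mat:
  assumes M: "subfield_C E" and s: "field_emb E \<tau>" and A: "mat_over E A"
  shows "trace (emb_mat \<tau> A) = \<tau> (trace A)"
  unfolding trace_def emb_mat_def using A unfolding mat_over_def by (simp add: field_emb_sum[OF M s])

lemma emb_mat_SU:
  assumes M: "subfield_C E" and s: "field_emb E \<tau>" and c: "\<forall>x\<in>E. cnj x \<in> E \<and> \<tau> (cnj x) = cnj (\<tau> x)"
    and H: "mat_over E H" and g: "mat_over E g" "g \<in> SU H"
  shows "emb_mat \<tau> g \<in> SU (emb_mat \<tau> H)"
proof -
  have cg: "mat_over E (cadj g)" using mat_over_cadj c g(1) by blast
  have d: "Determinants.det g = 1" and u: "cadj g ** H ** g = H" using g(2) unfolding SU_def by auto
  have "Determinants.det (emb_mat \<tau> g) = 1" using det_emb_mat[OF M s g(1)] d field_emb_1[OF s] by simp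
  moreover have "cadj (emb_mat \<tau> g) ** emb_mat \<tau> H ** emb_mat \<tau> g = emb_mat \<tau> H"
  proof -
    have "cadj (emb_mat \<tau> g) ** emb_mat \<tau> H ** emb_mat \<tau> g = emb_mat \<tau> (cadj g) ** emb_mat \<tau> H ** emb_mat \<tau> g"
      using emb_mat_cadj[OF c g(1)] by simp
    also have "\<dots> = emb_mat \<tau> (cadj g ** H) ** emb_mat \<tau> g" using emb_mat_mult[OF M s cg H] by simp
    also have "\<dots> = emb_mat \<tau> (cadj g ** H ** g)"
      using emb_mat_mult[OF M s mat_over_mult[OF M cg H] g(1)] by simp
    finally show ?thesis using u by simp
  qed
  ultimately show ?thesis unfolding SU_def by simp
qed

lemma bounded_imp_trace_bounded:
  assumes "bounded (S :: (complex^'n::finite^'n) set)"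
  shows "\<exists>C. \<forall>M\<in>S. norm (trace M) \<le> C"
proof -
  obtain a where a: "\<forall>x\<in>S. norm x \<le> a" using assms by (auto simp: bounded_iff)
  have "norm (trace M) \<le> of_nat CARD('n) * a" if "M \<in> S" for M
  proof -
    have "norm (trace M) \<le> (\<Sum>i\<in>UNIV. norm (M $ i $ i))" unfolding trace_def by (rule norm_sum)
    also have "\<dots> \<le> (\<Sum>i\<in>(UNIV::'n set). a)"
    proof (rule sum_mono)
      fix i :: 'n
      have "norm (M $ i $ i) \<le> norm (M $ i)" by (rule Finite_Cartesian_Product.norm_nth_le)
      also have "\<dots> \<le> norm M" by (rule Finite_Cartesian_Product.norm_nth_le)
      finally show "norm (M $ i $ i) \<le> a" using a that by force
    qed
    also have "\<dots> = of_nat CARD('n) * a" by simp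
    finally show ?thesis .
  qed
  then show ?thesis by blast
qed

section \<open>Trace fields of groups with a loxodromic element\<close>

lemma subgroup_matrix_pow: assumes G: "is_subgroup \<Gamma> X" and g: "g \<in> \<Gamma>" shows "matrix_pow g k \<in> \<Gamma>"
  using G g by (induction k) (auto simp: is_subgroup_def)

lemma matrix_vector_mult_smult: "(A :: complex^'n::finite^'m::finite) *v (c *s x) = c *s (A *v x)"
  by (simp add: Finite_Cartesian_Product.vec_eq_iff matrix_vector_mult_def sum_distrib_left algebra_simps)

lemma subgroup_loxodromic_expanding:
  assumes G: "is_subgroup \<Gamma> X" and g: "g \<in> \<Gamma>" "loxodromic g"
  obtains h v c where "h \<in> \<Gamma>" "v \<noteq> 0" "h *v v = c *s v" "norm c > 1"
proof -
  obtain v c where v: "v \<noteq> 0" "g *v v = c *s v" "norm c \<noteq> 1"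
    using g(2) unfolding loxodromic_def by blast
  show thesis
  proof (cases "norm c > 1")
    case True
    then show ?thesis using that g(1) v by blast
  next
    case False
    then have c1: "norm c < 1" using v(3) by simp
    obtain h where h: "h \<in> \<Gamma>" "g ** h = Finite_Cartesian_Product.mat 1"
      using G g(1) unfolding is_subgroup_def by blast
    have "h ** g = Finite_Cartesian_Product.mat 1" using h(2) matrix_left_right_inverse by blast
    then have hv: "h *v (g *v v) = v" by (simp add: matrix_vector_mul_assoc)
    have c0: "c \<noteq> 0"
      using hv v(1,2) by auto
    have "c *s (h *v v) = v" using hv v(2) by (simp add: matrix_vector_mult_smult)
    then have "h *v v = inverse c *s v"
      using c0 by (metis vector_smult_assoc left_inverse vector_smult_lid)
    moreover have "norm (inverse c) > 1" using c1 c0 by (simp add: norm_inverse one_less_inverse)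
    ultimately show ?thesis using that h(1) v(1) by blast
  qed
qed

lemma subgroup_bounded_traces_not_loxodromic:
  assumes G: "is_subgroup \<Gamma> X" and C: "\<forall>\<gamma>\<in>\<Gamma>. norm (trace \<gamma>) \<le> C" and g: "g \<in> \<Gamma>"
  shows "\<not> loxodromic g"
proof
  assume "loxodromic g"
  then obtain h v c where h: "h \<in> \<Gamma>" "v \<noteq> 0" "h *v v = c *s v" "norm c > 1"
    using subgroup_loxodromic_expanding[OF G g] by blast
  have "norm c \<le> 1"
    by (rule eigenvalue_norm_le_one_if_power_traces_bounded[OF h(3,2)])
      (use C subgroup_matrix_pow[OF G h(1)] in blast)
  then show False using h(4) by simp
qed

lemma traces_bounded_if_twist_compact:
  assumes E: "subfield_C E" and \<tau>: "field_emb E \<tau>"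
    and cnj: "\<forall>x\<in>E. cnj x \<in> E \<and> \<tau> (cnj x) = cnj (\<tau> x)"
    and H: "mat_over E H" and \<Gamma>: "\<Gamma> \<subseteq> SU H" "\<forall>\<gamma>\<in>\<Gamma>. mat_over E \<gamma>"
    and fixed: "\<forall>\<gamma>\<in>\<Gamma>. \<tau> (trace \<gamma>) = trace \<gamma>"
    and compact: "compact (SU (emb_mat \<tau> H))"
  obtains C where "\<forall>\<gamma>\<in>\<Gamma>. norm (trace \<gamma>) \<le> C"
proof -
  obtain C where C: "\<forall>M\<in>SU (emb_mat \<tau> H). norm (trace M) \<le> C"
    using bounded_imp_trace_bounded compact_imp_bounded[OF compact] by blast
  have "norm (trace \<gamma>) \<le> C" if "\<gamma> \<in> \<Gamma>" for \<gamma>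
  proof -
    have "emb_mat \<tau> \<gamma> \<in> SU (emb_mat \<tau> H)" using emb_mat_SU[OF E \<tau> cnj H] \<Gamma> that by blast
    moreover have "trace (emb_mat \<tau> \<gamma>) = trace \<gamma>" using trace_emb_mat[OF E \<tau>, of \<gamma>] \<Gamma>(2) fixed that by simp
    ultimately show ?thesis using C by metis
  qed
  then show thesis using that by blast
qed

theorem mainTheorem6:
  fixes E F :: "complex set" and H :: "complex^'n^'n" and \<Gamma> :: "(complex^'n^'n) set"
  assumes "number_field F" and "totally_real F"
    and "number_field E" and "totally_imaginary E" and "quadratic_ext E F"
    and "F = E \<inter> \<real>"
    and "\<forall>i j. H $ i $ j \<in> E"
    and "has_signature H (CARD('n) - 1) 1"
    and "admissible H E"
    and "is_subgroup \<Gamma> (SU_int H E)"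
    and "\<exists>g\<in>\<Gamma>. loxodromic g"
  shows "field_gen (trace ` \<Gamma>) = E \<or> field_gen (trace ` \<Gamma>) = F"
proof -
  note nF = assms(1) and trF = assms(2) and nE = assms(3) and tiE = assms(4) and qE = assms(5)
    and FE = assms(6) and adm = assms(9) and sub = assms(10) and lox = assms(11)
  have sE: "subfield_C E" and sF: "subfield_C F" using nE nF by (simp_all add: number_field_def)
  have H: "mat_over E H" using assms(7) by (simp add: mat_over_def)
  have \<Gamma>: "\<Gamma> \<subseteq> SU H" "\<forall>\<gamma>\<in>\<Gamma>. mat_over E \<gamma>"
    using sub unfolding is_subgroup_def SU_int_def ring_of_integers_def mat_over_def by auto
  define K where "K = field_gen (trace ` \<Gamma>)"
  have "K = E \<or> K = E \<inter> \<real>"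
  proof (rule subfield_fixed_by_id_or_cnj_cases[OF nE])
    show "subfield_C K" unfolding K_def by (rule field_gen_subfield)
    show "K \<subseteq> E" unfolding K_def
      using \<Gamma>(2) by (intro field_gen_least[OF sE]) (auto simp: trace_def mat_over_def intro!: subfield_C_sum[OF sE])
  next
    fix \<tau> assume \<tau>: "field_emb E \<tau>" "\<forall>k\<in>K. \<tau> k = k"
    show "(\<forall>x\<in>E. \<tau> x = x) \<or> (\<forall>x\<in>E. \<tau> x = cnj x)"
    proof (rule ccontr)
      assume "\<not> ?thesis"
      then have "compact (SU (emb_mat \<tau> H))" using adm \<tau>(1) unfolding admissible_def by blast
      moreover have "\<forall>\<gamma>\<in>\<Gamma>. \<tau> (trace \<gamma>) = trace \<gamma>" using \<tau>(2) field_gen_superset unfolding K_def by blast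
      ultimately obtain C where "\<forall>\<gamma>\<in>\<Gamma>. norm (trace \<gamma>) \<le> C"
        using traces_bounded_if_twist_compact[OF sE \<tau>(1) _ H \<Gamma>]
          CM_field_emb_cnj_commute[OF sE sF trF tiE qE FE \<tau>(1)] by blast
      then show False using subgroup_bounded_traces_not_loxodromic[OF sub] lox by blast
    qed
  qed
  then show ?thesis using FE unfolding K_def by blast
qed

end
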